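(* Let $C,D$ be category presentations. The uncurrying functor $\overline{(-)}:\mathbf{Curr}(C,D)\to\mathbf{UnCurr}(C,D)$ takes values in curryable profunctor presentations and rightward morphisms. Its corestriction $\overline{(-)}:\mathbf{Curr}(C,D)\to\mathbf{Crble}(C,D)$ is an equivalence of categories, and when $C,D$ are finite so is its restriction $\overline{(-)}:\mathbf{FinCurr}(C,D)\to\mathbf{FinCrble}(C,D)$; both preserve and reflect provable equality of morphisms (i.e. $F\approx G$ iff $\overline F\approx\overline G$).
   Context: Category presentations $C$: sorts, function symbols $f:c\to c'$, equations $C_E$ between parallel paths; finite if all these sets are finite; provable equality is the smallest equivalence relation on paths containing the equations and closed under concatenation with composable function symbols. Uncurried presentations $P:C\nrightarrow D$: a set $\mathrm{Fun}(P)$ of symbols $x:c\to d$ ($c$ a $C$-sort, $d$ a $D$-sort) and a set $P_E$ of equations between cross-paths (paths from a $C$-sort to a $D$-sort) of the category presentation $|P|$ with sorts $\mathrm{Sort}(C)+\mathrm{Sort}(D)$, symbols $\mathrm{Fun}(C)+\mathrm{Fun}(P)+\mathrm{Fun}(D)$, equations $C_E+P_E+D_E$; $\approx_P$ is provable equality of $|P|$ restricted to cross-paths. Morphisms $F:P\to P'$ send each $x:c\to d$ to a cross-path $F(x):c\to d$ of $P'$ such that the extension acting as identity on $C$ and $D$ maps every equation of $|P|$ to a provable equality of $|P'|$; composition by substitution; category $\mathbf{UnCurr}(C,D)$; $F\approx F'$ iff $F(x)\approx_{P'}F'(x)$ for all $x$. A short left cross-path is $f.p$ with $f\in\mathrm{Fun}(C)$,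 $p\in\mathrm{Fun}(P)$; a right cross-path is $p.g$ with $p\in\mathrm{Fun}(P)$, $g$ a $D$-path. For a $C$-sort $c$, $P^c$ is the $D$-instance presentation with generators the symbols $p:c\to d$ of $P$ and equations those of $P_E$ with source $c$. $P$ is nongenerative if every short left cross-path is $\approx_P$-equal to a right cross-path, conservative if right cross-paths $t,t'$ from $c$ with $t\approx_P t'$ satisfy $t\approx_{P^c}t'$, and curryable if both. A morphism is rightward if it sends each symbol to a right cross-path. $\mathbf{Crble}(C,D)$ is the (non-full) subcategory of $\mathbf{UnCurr}(C,D)$ with curryable objects and rightward morphisms; $\mathbf{FinCrble}(C,D)$ its full subcategory on presentations with $\mathrm{Fun}(P)$, $P_E$ finite. Instance presentations: a $D$-instance presentation $I$ has generators $x:d$ and equations between terms $x.g$; $\approx_I$ is the smallest equivalence relation on terms containing $I_E$, closed under right concatenation with $D$-function symbols, identifying $t.g,t.g'$ for equations $g=g'$ of $D_E$. Morphisms $F:I\to J$ send generators $x:d$ to terms $F(x):d$ respecting equations up to $\approx_J$; $F(x.g):=F(x).g$; $F\approx G$ iff $F(x)\approx_J G(x)$. Curried presentations $P:C\nrightarrow D$: $D$-instance presentations $P(c)$ and $D$-instance morphisms $P(f):P(c')\to P(c)$ for $f:c\to c'$, with $P(p)\approx P(p')$ for equations $p=p'$ of $C_E$ ($P(f_1.\cdots.f_n):=P(f_n)\circ\cdots\circ P(f_1)$). Morphisms: families $F_c:P(c)\to P'(c)$ with $F_c\circ P(f)\approx P'(f)\circ F_{c'}$; $\mathbf{Curr}(C,D)$;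 $F\approx G$ iff all $F_c\approx G_c$; $\mathbf{FinCurr}(C,D)$ the full subcategory with all $P(c)$ finite. Uncurrying: $\overline P$ has a symbol $\overline p:c\to d$ for each $C$-sort $c$ and generator $p:d$ of $P(c)$; $\overline{p.g}:=\overline p.g$; equations $\overline t=\overline{t'}$ for each equation $t=t'$ of each $P(c)$, and $f.\overline p=\overline{P(f)(p)}$ for each $f:c\to c'$ in $\mathrm{Fun}(C)$ and generator $p$ of $P(c')$. On morphisms $\overline F(\overline p):=\overline{F_c(p)}$. *)

theory Defs
  imports Main
begin

record ('s,'f) catp =
  Sorts :: "'s set"
  Funs  :: "'f set"
  csrc  :: "'f \<Rightarrow> 's"
  ctgt  :: "'f \<Rightarrow> 's"
  Eqs   :: "(('s \<times> 'f list) \<times> ('s \<times> 'f list)) set"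

text \<open>A path is a pair (source sort, list of symbols); the empty list is the identity path.
  path_ok C c fs d: fs is a path of C from c to d.\<close>
fun path_ok :: "('s,'f,'z) catp_scheme \<Rightarrow> 's \<Rightarrow> 'f list \<Rightarrow> 's \<Rightarrow> bool" where
  "path_ok C c [] d = (c = d \<and> c \<in> Sorts C)"
| "path_ok C c (f # fs) d = (c \<in> Sorts C \<and> f \<in> Funs C \<and> csrc C f = c \<and> path_ok C (ctgt C f) fs d)"

definition ptgt :: "('s,'f,'z) catp_scheme \<Rightarrow> 's \<times> 'f list \<Rightarrow> 's" where
  "ptgt C p = (if snd p = [] then fst p else ctgt C (last (snd p)))"

definition wf_catp :: "('s,'f,'z) catp_scheme \<Rightarrow> bool" where
  "wf_catp C \<longleftrightarrow>
     (\<forall>f\<in>Funs C. csrc C f \<in> Sorts C \<and> ctgt C f \<in> Sorts C) \<and>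
     (\<forall>((c,fs),(c',gs))\<in>Eqs C. c = c' \<and> (\<exists>d. path_ok C c fs d \<and> path_ok C c gs d))"

definition fin_catp :: "('s,'f,'z) catp_scheme \<Rightarrow> bool" where
  "fin_catp C \<longleftrightarrow> finite (Sorts C) \<and> finite (Funs C) \<and> finite (Eqs C)"

inductive peq :: "('s,'f,'z) catp_scheme \<Rightarrow> 's \<times> 'f list \<Rightarrow> 's \<times> 'f list \<Rightarrow> bool"
  for C where
  peq_refl: "path_ok C c fs d \<Longrightarrow> peq C (c, fs) (c, fs)"
| peq_eq: "(p, q) \<in> Eqs C \<Longrightarrow> peq C p q"
| peq_sym: "peq C p q \<Longrightarrow> peq C q p"
| peq_trans: "peq C p q \<Longrightarrow> peq C q r \<Longrightarrow> peq C p r"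
| peq_left: "peq C (c, fs) (c, gs) \<Longrightarrow> f \<in> Funs C \<Longrightarrow> ctgt C f = c \<Longrightarrow>
              peq C (csrc C f, f # fs) (csrc C f, f # gs)"
| peq_right: "peq C (c, fs) (c', gs) \<Longrightarrow> f \<in> Funs C \<Longrightarrow> path_ok C c fs (csrc C f) \<Longrightarrow>
              peq C (c, fs @ [f]) (c', gs @ [f])"

record ('d,'fd,'g) instp =
  Gens  :: "'g set"
  gsort :: "'g \<Rightarrow> 'd"
  IEqs  :: "(('g \<times> 'fd list) \<times> ('g \<times> 'fd list)) set"

text \<open>A term x.g is a pair (generator, D-path).\<close>
definition term_ok :: "('d,'fd) catp \<Rightarrow> ('d,'fd,'g) instp \<Rightarrow> 'g \<times> 'fd list \<Rightarrow> 'd \<Rightarrow> bool" where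
  "term_ok D I t d \<longleftrightarrow> fst t \<in> Gens I \<and> path_ok D (gsort I (fst t)) (snd t) d"

definition wf_instp :: "('d,'fd) catp \<Rightarrow> ('d,'fd,'g) instp \<Rightarrow> bool" where
  "wf_instp D I \<longleftrightarrow> (\<forall>x\<in>Gens I. gsort I x \<in> Sorts D) \<and>
     (\<forall>(t,t')\<in>IEqs I. \<exists>d. term_ok D I t d \<and> term_ok D I t' d)"

definition fin_instp :: "('d,'fd,'g) instp \<Rightarrow> bool" where
  "fin_instp I \<longleftrightarrow> finite (Gens I) \<and> finite (IEqs I)"

inductive ieq :: "('d,'fd) catp \<Rightarrow> ('d,'fd,'g) instp \<Rightarrow> 'g \<times> 'fd list \<Rightarrow> 'g \<times> 'fd list \<Rightarrow> bool"
  for D I where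
  ieq_refl: "term_ok D I t d \<Longrightarrow> ieq D I t t"
| ieq_eq: "(t, t') \<in> IEqs I \<Longrightarrow> ieq D I t t'"
| ieq_sym: "ieq D I t t' \<Longrightarrow> ieq D I t' t"
| ieq_trans: "ieq D I t t' \<Longrightarrow> ieq D I t' t'' \<Longrightarrow> ieq D I t t''"
| ieq_right: "ieq D I (x, gs) (y, hs) \<Longrightarrow> f \<in> Funs D \<Longrightarrow> term_ok D I (x, gs) (csrc D f) \<Longrightarrow>
              ieq D I (x, gs @ [f]) (y, hs @ [f])"
| ieq_Deq: "term_ok D I (x, gs) c \<Longrightarrow> ((c, g), (c, g')) \<in> Eqs D \<Longrightarrow>
              ieq D I (x, gs @ g) (x, gs @ g')"

definition iapp :: "('g \<Rightarrow> 'h \<times> 'fd list) \<Rightarrow> 'g \<times> 'fd list \<Rightarrow> 'h \<times> 'fd list" where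
  "iapp F t = (fst (F (fst t)), snd (F (fst t)) @ snd t)"

definition icomp :: "('h \<Rightarrow> 'k \<times> 'fd list) \<Rightarrow> ('g \<Rightarrow> 'h \<times> 'fd list) \<Rightarrow> 'g \<Rightarrow> 'k \<times> 'fd list" where
  "icomp G F x = iapp G (F x)"

definition inst_mor :: "('d,'fd) catp \<Rightarrow> ('d,'fd,'g) instp \<Rightarrow> ('d,'fd,'h) instp \<Rightarrow>
     ('g \<Rightarrow> 'h \<times> 'fd list) \<Rightarrow> bool" where
  "inst_mor D I J F \<longleftrightarrow> (\<forall>x\<in>Gens I. term_ok D J (F x) (gsort I x)) \<and>
     (\<forall>(t,t')\<in>IEqs I. ieq D J (iapp F t) (iapp F t'))"

definition inst_meq :: "('d,'fd) catp \<Rightarrow> ('d,'fd,'g) instp \<Rightarrow> ('d,'fd,'h) instp \<Rightarrow>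
     ('g \<Rightarrow> 'h \<times> 'fd list) \<Rightarrow> ('g \<Rightarrow> 'h \<times> 'fd list) \<Rightarrow> bool" where
  "inst_meq D I J F G \<longleftrightarrow> (\<forall>x\<in>Gens I. ieq D J (F x) (G x))"

record ('c,'d,'fc,'fd,'g) currp =
  Inst :: "'c \<Rightarrow> ('d,'fd,'g) instp"
  Act  :: "'fc \<Rightarrow> 'g \<Rightarrow> 'g \<times> 'fd list"

text \<open>P(f1. ... .fn) = P(f1) o ... o P(fn) (a morphism P(c_n) \<rightarrow> P(c_0)).\<close>
fun pact :: "('c,'d,'fc,'fd,'g) currp \<Rightarrow> 'fc list \<Rightarrow> 'g \<Rightarrow> 'g \<times> 'fd list" where
  "pact P [] x = (x, [])"
| "pact P (f # fs) x = iapp (Act P f) (pact P fs x)"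

definition wf_currp :: "('c,'fc) catp \<Rightarrow> ('d,'fd) catp \<Rightarrow> ('c,'d,'fc,'fd,'g) currp \<Rightarrow> bool" where
  "wf_currp C D P \<longleftrightarrow>
     (\<forall>c\<in>Sorts C. wf_instp D (Inst P c)) \<and>
     (\<forall>f\<in>Funs C. inst_mor D (Inst P (ctgt C f)) (Inst P (csrc C f)) (Act P f)) \<and>
     (\<forall>(p,p')\<in>Eqs C. inst_meq D (Inst P (ptgt C p)) (Inst P (fst p)) (pact P (snd p)) (pact P (snd p')))"

definition fin_currp :: "('c,'fc) catp \<Rightarrow> ('c,'d,'fc,'fd,'g) currp \<Rightarrow> bool" where
  "fin_currp C P \<longleftrightarrow> (\<forall>c\<in>Sorts C. fin_instp (Inst P c))"

definition curr_mor :: "('c,'fc) catp \<Rightarrow> ('d,'fd) catp \<Rightarrow> ('c,'d,'fc,'fd,'g) currp \<Rightarrow>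
    ('c,'d,'fc,'fd,'h) currp \<Rightarrow> ('c \<Rightarrow> 'g \<Rightarrow> 'h \<times> 'fd list) \<Rightarrow> bool" where
  "curr_mor C D P Q F \<longleftrightarrow>
     (\<forall>c\<in>Sorts C. inst_mor D (Inst P c) (Inst Q c) (F c)) \<and>
     (\<forall>f\<in>Funs C. inst_meq D (Inst P (ctgt C f)) (Inst Q (csrc C f))
         (icomp (F (csrc C f)) (Act P f)) (icomp (Act Q f) (F (ctgt C f))))"

definition curr_meq :: "('c,'fc) catp \<Rightarrow> ('d,'fd) catp \<Rightarrow> ('c,'d,'fc,'fd,'g) currp \<Rightarrow>
    ('c,'d,'fc,'fd,'h) currp \<Rightarrow> ('c \<Rightarrow> 'g \<Rightarrow> 'h \<times> 'fd list) \<Rightarrow> ('c \<Rightarrow> 'g \<Rightarrow> 'h \<times> 'fd list) \<Rightarrow> bool" where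
  "curr_meq C D P Q F G \<longleftrightarrow> (\<forall>c\<in>Sorts C. inst_meq D (Inst P c) (Inst Q c) (F c) (G c))"

definition curr_id :: "'c \<Rightarrow> 'g \<Rightarrow> 'g \<times> 'fd list" where
  "curr_id c x = (x, [])"

definition curr_comp :: "('c \<Rightarrow> 'h \<Rightarrow> 'k \<times> 'fd list) \<Rightarrow> ('c \<Rightarrow> 'g \<Rightarrow> 'h \<times> 'fd list) \<Rightarrow>
    'c \<Rightarrow> 'g \<Rightarrow> 'k \<times> 'fd list" where
  "curr_comp G F c = icomp (G c) (F c)"

type_synonym ('c,'d,'fc,'fd,'p) xpath = "('c + 'd) \<times> ('fc + 'p + 'fd) list"

record ('c,'d,'fc,'fd,'p) ucp =
  UFuns :: "'p set"
  usrc  :: "'p \<Rightarrow> 'c"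
  utgt  :: "'p \<Rightarrow> 'd"
  UEqs  :: "(('c,'d,'fc,'fd,'p) xpath \<times> ('c,'d,'fc,'fd,'p) xpath) set"

definition total :: "('c,'fc) catp \<Rightarrow> ('d,'fd) catp \<Rightarrow> ('c,'d,'fc,'fd,'p) ucp \<Rightarrow>
    ('c + 'd, 'fc + 'p + 'fd) catp" where
  "total C D P = \<lparr>
     Sorts = Inl ` Sorts C \<union> Inr ` Sorts D,
     Funs = Inl ` Funs C \<union> (Inr \<circ> Inl) ` UFuns P \<union> (Inr \<circ> Inr) ` Funs D,
     csrc = case_sum (Inl \<circ> csrc C) (case_sum (Inl \<circ> usrc P) (Inr \<circ> csrc D)),
     ctgt = case_sum (Inl \<circ> ctgt C) (case_sum (Inr \<circ> utgt P) (Inr \<circ> ctgt D)),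
     Eqs = (\<lambda>((c,fs),(c',gs)). ((Inl c, map Inl fs), (Inl c', map Inl gs))) ` Eqs C
           \<union> UEqs P
           \<union> (\<lambda>((c,fs),(c',gs)). ((Inr c, map (Inr \<circ> Inr) fs), (Inr c', map (Inr \<circ> Inr) gs))) ` Eqs D \<rparr>"

definition cross_path :: "('c,'fc) catp \<Rightarrow> ('d,'fd) catp \<Rightarrow> ('c,'d,'fc,'fd,'p) ucp \<Rightarrow>
    'c \<Rightarrow> 'd \<Rightarrow> ('c,'d,'fc,'fd,'p) xpath \<Rightarrow> bool" where
  "cross_path C D P c d x \<longleftrightarrow> fst x = Inl c \<and> path_ok (total C D P) (Inl c) (snd x) (Inr d)"

definition wf_ucp :: "('c,'fc) catp \<Rightarrow> ('d,'fd) catp \<Rightarrow> ('c,'d,'fc,'fd,'p) ucp \<Rightarrow> bool" where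
  "wf_ucp C D P \<longleftrightarrow> (\<forall>p\<in>UFuns P. usrc P p \<in> Sorts C \<and> utgt P p \<in> Sorts D) \<and>
     (\<forall>(s,t)\<in>UEqs P. \<exists>c d. cross_path C D P c d s \<and> cross_path C D P c d t)"

definition fin_ucp :: "('c,'d,'fc,'fd,'p) ucp \<Rightarrow> bool" where
  "fin_ucp P \<longleftrightarrow> finite (UFuns P) \<and> finite (UEqs P)"

definition uext :: "('p \<Rightarrow> ('c,'d,'fc,'fd,'q) xpath) \<Rightarrow> ('c,'d,'fc,'fd,'p) xpath \<Rightarrow> ('c,'d,'fc,'fd,'q) xpath" where
  "uext F x = (fst x, concat (map (\<lambda>s. case s of Inl f \<Rightarrow> [Inl f]
                                            | Inr (Inl p) \<Rightarrow> snd (F p)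
                                            | Inr (Inr g) \<Rightarrow> [Inr (Inr g)]) (snd x)))"

definition ucp_mor :: "('c,'fc) catp \<Rightarrow> ('d,'fd) catp \<Rightarrow> ('c,'d,'fc,'fd,'p) ucp \<Rightarrow>
    ('c,'d,'fc,'fd,'q) ucp \<Rightarrow> ('p \<Rightarrow> ('c,'d,'fc,'fd,'q) xpath) \<Rightarrow> bool" where
  "ucp_mor C D P Q F \<longleftrightarrow>
     (\<forall>p\<in>UFuns P. cross_path C D Q (usrc P p) (utgt P p) (F p)) \<and>
     (\<forall>(s,t)\<in>Eqs (total C D P). peq (total C D Q) (uext F s) (uext F t))"

definition ucp_meq :: "('c,'fc) catp \<Rightarrow> ('d,'fd) catp \<Rightarrow> ('c,'d,'fc,'fd,'p) ucp \<Rightarrow>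
    ('c,'d,'fc,'fd,'q) ucp \<Rightarrow> ('p \<Rightarrow> ('c,'d,'fc,'fd,'q) xpath) \<Rightarrow> ('p \<Rightarrow> ('c,'d,'fc,'fd,'q) xpath) \<Rightarrow> bool" where
  "ucp_meq C D P Q F G \<longleftrightarrow> (\<forall>p\<in>UFuns P. peq (total C D Q) (F p) (G p))"

definition ucp_id :: "('c,'d,'fc,'fd,'p) ucp \<Rightarrow> 'p \<Rightarrow> ('c,'d,'fc,'fd,'p) xpath" where
  "ucp_id P p = (Inl (usrc P p), [Inr (Inl p)])"

definition ucp_comp :: "('q \<Rightarrow> ('c,'d,'fc,'fd,'r) xpath) \<Rightarrow> ('p \<Rightarrow> ('c,'d,'fc,'fd,'q) xpath) \<Rightarrow>
    'p \<Rightarrow> ('c,'d,'fc,'fd,'r) xpath" where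
  "ucp_comp G F p = uext G (F p)"

definition rcp :: "('c,'d,'fc,'fd,'p) ucp \<Rightarrow> 'p \<Rightarrow> 'fd list \<Rightarrow> ('c,'d,'fc,'fd,'p) xpath" where
  "rcp P p g = (Inl (usrc P p), Inr (Inl p) # map (Inr \<circ> Inr) g)"

definition right_cross :: "('d,'fd) catp \<Rightarrow> ('c,'d,'fc,'fd,'p) ucp \<Rightarrow> ('c,'d,'fc,'fd,'p) xpath \<Rightarrow> bool" where
  "right_cross D P x \<longleftrightarrow> (\<exists>p g d. p \<in> UFuns P \<and> path_ok D (utgt P p) g d \<and> x = rcp P p g)"

definition nongenerative :: "('c,'fc) catp \<Rightarrow> ('d,'fd) catp \<Rightarrow> ('c,'d,'fc,'fd,'p) ucp \<Rightarrow> bool" where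
  "nongenerative C D P \<longleftrightarrow>
     (\<forall>f\<in>Funs C. \<forall>p\<in>UFuns P. ctgt C f = usrc P p \<longrightarrow>
        (\<exists>x. right_cross D P x \<and> peq (total C D P) (Inl (csrc C f), [Inl f, Inr (Inl p)]) x))"

definition ucp_at :: "('c,'d,'fc,'fd,'p) ucp \<Rightarrow> 'c \<Rightarrow> ('d,'fd,'p) instp" where
  "ucp_at P c = \<lparr> Gens = {p\<in>UFuns P. usrc P p = c}, gsort = utgt P,
     IEqs = {((p,g),(p',g')). (rcp P p g, rcp P p' g') \<in> UEqs P \<and> usrc P p = c \<and> usrc P p' = c} \<rparr>"

definition conservative :: "('c,'fc) catp \<Rightarrow> ('d,'fd) catp \<Rightarrow> ('c,'d,'fc,'fd,'p) ucp \<Rightarrow> bool" where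
  "conservative C D P \<longleftrightarrow>
     (\<forall>c p g d p' g' d'. p \<in> UFuns P \<and> p' \<in> UFuns P \<and> usrc P p = c \<and> usrc P p' = c \<and>
        path_ok D (utgt P p) g d \<and> path_ok D (utgt P p') g' d' \<and>
        peq (total C D P) (rcp P p g) (rcp P p' g') \<longrightarrow> ieq D (ucp_at P c) (p, g) (p', g'))"

definition curryable :: "('c,'fc) catp \<Rightarrow> ('d,'fd) catp \<Rightarrow> ('c,'d,'fc,'fd,'p) ucp \<Rightarrow> bool" where
  "curryable C D P \<longleftrightarrow> nongenerative C D P \<and> conservative C D P"

definition rightward :: "('d,'fd) catp \<Rightarrow> ('c,'d,'fc,'fd,'p) ucp \<Rightarrow> ('c,'d,'fc,'fd,'q) ucp \<Rightarrow>
    ('p \<Rightarrow> ('c,'d,'fc,'fd,'q) xpath) \<Rightarrow> bool" where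
  "rightward D P Q F \<longleftrightarrow> (\<forall>p\<in>UFuns P. right_cross D Q (F p))"

definition ov :: "'c \<Rightarrow> 'g \<times> 'fd list \<Rightarrow> ('c,'d,'fc,'fd,'c \<times> 'g) xpath" where
  "ov c t = (Inl c, Inr (Inl (c, fst t)) # map (Inr \<circ> Inr) (snd t))"

definition uncurry :: "('c,'fc) catp \<Rightarrow> ('c,'d,'fc,'fd,'g) currp \<Rightarrow> ('c,'d,'fc,'fd,'c \<times> 'g) ucp" where
  "uncurry C P = \<lparr>
     UFuns = Sigma (Sorts C) (\<lambda>c. Gens (Inst P c)),
     usrc = fst,
     utgt = (\<lambda>(c,p). gsort (Inst P c) p),
     UEqs = {(ov c t, ov c t') | c t t'. c \<in> Sorts C \<and> (t, t') \<in> IEqs (Inst P c)}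
          \<union> {((Inl (csrc C f), [Inl f, Inr (Inl (ctgt C f, p))]), ov (csrc C f) (Act P f p)) | f p.
                f \<in> Funs C \<and> p \<in> Gens (Inst P (ctgt C f))} \<rparr>"

definition uncurry_mor :: "('c \<Rightarrow> 'g \<Rightarrow> 'h \<times> 'fd list) \<Rightarrow> 'c \<times> 'g \<Rightarrow> ('c,'d,'fc,'fd,'c \<times> 'h) xpath" where
  "uncurry_mor F x = ov (fst x) (F (fst x) (snd x))"

end

theory Submission
  imports Defs
begin

text \<open>Uncurrying turns the generators of the instances P(c) into symbols c \<rightarrow> d and adds the action
  equations f.p = P(f)(p). Using the action equations, every cross path f_1 \<dots> f_n . p . g
  rewrites to the right cross path given by P(f_1 \<dots> f_n)(p.g). Conversely, provable equality in
  the uncurried presentation is contained in the relation comparing C-paths by their actions, cross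
  paths by these normal forms in the instances, and D-paths by their right actions, since that
  relation is a congruence containing all equations. Hence provable equality of right cross paths is
  exactly equality in the instances, which yields conservativity and also faithfulness and fullness on
  rightward morphisms. A curryable Q is curried by P(c) = Q^c, with f acting on p by a right cross path
  equal to f.p; nongenerativity provides it and conservativity makes the action respect equations.
  Tagging symbols of Q with their source and forgetting the tag are then mutually inverse.\<close>

section \<open>Paths and provable equality\<close>

lemma path_ok_src: "path_ok C c fs d \<Longrightarrow> c \<in> Sorts C"
  by (cases fs) auto

lemma path_ok_append:
  "path_ok C c (xs @ ys) e \<longleftrightarrow> (\<exists>d. path_ok C c xs d \<and> path_ok C d ys e)"
  by (induction xs arbitrary: c) (auto dest: path_ok_src)

lemma path_ok_tgt_unique: "path_ok C c fs d \<Longrightarrow> path_ok C c fs d' \<Longrightarrow> d = d'"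
  by (induction fs arbitrary: c) auto

lemma path_ok_tgt: "wf_catp C \<Longrightarrow> path_ok C c fs d \<Longrightarrow> d \<in> Sorts C"
  by (induction fs arbitrary: c) (auto simp: wf_catp_def)

lemma ptgt_path_ok: "path_ok C c fs d \<Longrightarrow> ptgt C (c, fs) = d"
proof (induction fs arbitrary: c)
  case (Cons f fs)
  then show ?case by (cases fs) (auto simp: ptgt_def)
qed (simp add: ptgt_def)

lemma wf_catp_fun_sorts: "wf_catp C \<Longrightarrow> f \<in> Funs C \<Longrightarrow> csrc C f \<in> Sorts C \<and> ctgt C f \<in> Sorts C"
  by (simp add: wf_catp_def)

lemma wf_catp_eqD:
  "wf_catp C \<Longrightarrow> ((c, fs), (c', gs)) \<in> Eqs C \<Longrightarrow> c = c' \<and> (\<exists>d. path_ok C c fs d \<and> path_ok C c gs d)"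
  unfolding wf_catp_def by fastforce

lemma peq_reflI: "path_ok C (fst p) (snd p) d \<Longrightarrow> peq C p p"
  by (cases p) (auto intro: peq_refl)

lemma peq_path_ok:
  assumes "wf_catp C" "peq C s t"
  shows "fst s = fst t \<and> (\<exists>d. path_ok C (fst s) (snd s) d \<and> path_ok C (fst t) (snd t) d)"
  using assms(2)
proof (induction rule: peq.induct)
  case (peq_eq p q)
  then show ?case using wf_catp_eqD[OF assms(1)] by (cases p, cases q) fastforce
next
  case (peq_trans p q r)
  then show ?case by (metis path_ok_tgt_unique)
next
  case (peq_left c fs gs f)
  then show ?case using wf_catp_fun_sorts[OF assms(1)] by auto
next
  case (peq_right c fs c' gs f)
  then obtain d where "path_ok C c fs d" "path_ok C c' gs d" "c = c'" by auto
  moreover have "d = csrc C f" using peq_right path_ok_tgt_unique calculation by metis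
  ultimately show ?case using peq_right wf_catp_fun_sorts[OF assms(1)] by (auto simp: path_ok_append)
qed auto

lemma peq_append_right:
  "peq C (a, xs) (b, ys) \<Longrightarrow> path_ok C a xs e \<Longrightarrow> path_ok C e zs e' \<Longrightarrow>
   peq C (a, xs @ zs) (b, ys @ zs)"
proof (induction zs arbitrary: xs ys e)
  case (Cons z zs)
  have "peq C (a, xs @ [z]) (b, ys @ [z])"
    using Cons.prems by (intro peq_right) auto
  moreover have "path_ok C a (xs @ [z]) (ctgt C z)"
    using Cons.prems by (auto simp: path_ok_append dest: path_ok_src)
  ultimately show ?case
    using Cons.IH[of "xs @ [z]" "ys @ [z]"] Cons.prems by auto
qed simp

lemma peq_append_left:
  "peq C (a, xs) (a, ys) \<Longrightarrow> path_ok C b zs a \<Longrightarrow> peq C (b, zs @ xs) (b, zs @ ys)"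
proof (induction zs arbitrary: b)
  case (Cons z zs)
  then have "peq C (csrc C z, z # zs @ xs) (csrc C z, z # zs @ ys)"
    by (intro peq_left) auto
  then show ?case using Cons.prems by auto
qed simp

lemma term_ok_append:
  "term_ok D I (x, k) d \<Longrightarrow> path_ok D d g e \<Longrightarrow> term_ok D I (x, k @ g) e"
  by (auto simp: term_ok_def path_ok_append)

lemma ieq_append:
  "ieq D I t t' \<Longrightarrow> term_ok D I t d \<Longrightarrow> path_ok D d g e \<Longrightarrow>
   ieq D I (fst t, snd t @ g) (fst t', snd t' @ g)"
proof (induction g arbitrary: t t' d)
  case (Cons f g)
  obtain x gs y hs where t: "t = (x, gs)" "t' = (y, hs)" by (cases t, cases t')
  have "ieq D I (x, gs @ [f]) (y, hs @ [f])"
    using Cons.prems t by (intro ieq_right) auto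
  moreover have "term_ok D I (x, gs @ [f]) (ctgt D f)"
    using Cons.prems t by (intro term_ok_append[where d=d]) (auto dest: path_ok_src)
  ultimately show ?case
    using Cons.IH[of "(x, gs @ [f])" "(y, hs @ [f])"] Cons.prems t by auto
qed simp

lemma iapp_term_ok:
  "inst_mor D I J F \<Longrightarrow> term_ok D I t d \<Longrightarrow> term_ok D J (iapp F t) d"
  unfolding inst_mor_def term_ok_def iapp_def by (auto simp: path_ok_append)

lemma ieq_iapp:
  assumes "inst_mor D I J F" "ieq D I t t'"
  shows "ieq D J (iapp F t) (iapp F t')"
  using assms(2)
proof (induction rule: ieq.induct)
  case (ieq_refl t d)
  then show ?case using assms(1) by (metis iapp_term_ok ieq.ieq_refl)
next
  case (ieq_eq t t')
  then show ?case using assms(1) unfolding inst_mor_def by auto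
next
  case (ieq_sym t t')
  from ieq_sym.IH show ?case by (rule ieq.ieq_sym)
next
  case (ieq_trans t t' t'')
  then show ?case by (metis ieq.ieq_trans)
next
  case (ieq_right x gs y hs f)
  have "term_ok D J (iapp F (x, gs)) (csrc D f)"
    using ieq_right assms(1) by (intro iapp_term_ok) auto
  then show ?case
    using ieq.ieq_right[of D J "fst (iapp F (x, gs))" "snd (iapp F (x, gs))"
        "fst (iapp F (y, hs))" "snd (iapp F (y, hs))" f] ieq_right
    by (simp add: iapp_def)
next
  case (ieq_Deq x gs c g g')
  have "term_ok D J (iapp F (x, gs)) c"
    using ieq_Deq assms(1) by (intro iapp_term_ok) auto
  then show ?case
    using ieq.ieq_Deq[of D J "fst (iapp F (x, gs))" "snd (iapp F (x, gs))" c g g'] ieq_Deq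
    by (simp add: iapp_def)
qed

lemma ieq_iapp_meq:
  assumes "inst_meq D I J F G" "inst_mor D I J F" "term_ok D I t d"
  shows "ieq D J (iapp F t) (iapp G t)"
proof -
  have "ieq D J (F (fst t)) (G (fst t))" "term_ok D J (F (fst t)) (gsort I (fst t))"
    using assms unfolding inst_meq_def inst_mor_def term_ok_def by auto
  from ieq_append[OF this, of "snd t" d] show ?thesis
    using assms(3) by (simp add: iapp_def term_ok_def)
qed

lemma iapp_iapp: "iapp F (iapp G t) = iapp (\<lambda>y. iapp F (G y)) t"
  by (simp add: iapp_def)

lemma iapp_id [simp]: "iapp (\<lambda>x. (x, [])) t = t"
  by (simp add: iapp_def)

lemma iapp_gen [simp]: "iapp F (x, []) = F x"
  by (simp add: iapp_def)

lemma inst_mor_comp: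
  assumes F: "inst_mor D I J F" and G: "inst_mor D J K G"
  shows "inst_mor D I K (icomp G F)"
  unfolding inst_mor_def icomp_def
proof (intro conjI ballI)
  fix x assume "x \<in> Gens I"
  then have "term_ok D J (F x) (gsort I x)"
    using F unfolding inst_mor_def by auto
  then show "term_ok D K (iapp G (F x)) (gsort I x)"
    using G by (rule iapp_term_ok[rotated])
next
  fix tt assume "tt \<in> IEqs I"
  then have "ieq D J (iapp F (fst tt)) (iapp F (snd tt))"
    using F unfolding inst_mor_def by auto
  from ieq_iapp[OF G this]
  show "case tt of (t, t') \<Rightarrow> ieq D K (iapp (\<lambda>x. iapp G (F x)) t) (iapp (\<lambda>x. iapp G (F x)) t')"
    by (auto simp: iapp_iapp)
qed

lemma inst_mor_id: "wf_instp D I \<Longrightarrow> inst_mor D I I (\<lambda>x. (x, []))"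
  unfolding inst_mor_def wf_instp_def term_ok_def by (auto intro: ieq_eq)

lemma pact_append: "pact P (fs @ gs) x = iapp (pact P fs) (pact P gs x)"
  by (induction fs) (auto simp: iapp_iapp)

lemma iapp_pact_Nil [simp]: "iapp (pact P []) t = t"
  by (simp add: iapp_def)

lemma iapp_pact_Cons: "iapp (pact P (f # fs)) t = iapp (Act P f) (iapp (pact P fs) t)"
  by (simp add: iapp_def)

text \<open>A curried presentation without its C-equations. Currying first yields such a diagram; its
  C-equations are derived afterwards from normal forms (curry_pact_meq).\<close>

definition wf_currp_graph :: "('c,'fc) catp \<Rightarrow> ('d,'fd) catp \<Rightarrow> ('c,'d,'fc,'fd,'g) currp \<Rightarrow> bool" where
  "wf_currp_graph C D P \<longleftrightarrow> (\<forall>c\<in>Sorts C. wf_instp D (Inst P c)) \<and>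
     (\<forall>f\<in>Funs C. inst_mor D (Inst P (ctgt C f)) (Inst P (csrc C f)) (Act P f))"

lemma wf_currp_graphI: "wf_currp C D P \<Longrightarrow> wf_currp_graph C D P"
  by (simp add: wf_currp_def wf_currp_graph_def)

lemma pact_inst_mor:
  assumes "wf_currp_graph C D P" "wf_catp C" "path_ok C c fs c'"
  shows "inst_mor D (Inst P c') (Inst P c) (pact P fs)"
  using assms(3)
proof (induction fs arbitrary: c)
  case Nil
  then have "pact P [] = (\<lambda>x. (x, []))" "wf_instp D (Inst P c)"
    using assms(1) by (auto simp: wf_currp_graph_def)
  then show ?case using Nil inst_mor_id by auto
next
  case (Cons f fs)
  then have "inst_mor D (Inst P c') (Inst P (ctgt C f)) (pact P fs)"
    and "inst_mor D (Inst P (ctgt C f)) (Inst P c) (Act P f)"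
    using assms(1) unfolding wf_currp_graph_def by auto
  from inst_mor_comp[OF this] show ?case
    by (simp add: icomp_def[abs_def])
qed

lemma pact_term_ok:
  assumes "wf_currp_graph C D P" "wf_catp C" "path_ok C c fs c1" "x \<in> Gens (Inst P c1)"
    "path_ok D (gsort (Inst P c1) x) g d"
  shows "term_ok D (Inst P c) (iapp (pact P fs) (x, g)) d"
  using assms by (intro iapp_term_ok[OF pact_inst_mor[OF assms(1-3)]]) (auto simp: term_ok_def)

section \<open>The total presentation of an uncurried presentation\<close>

lemma total_simps [simp]:
  "Sorts (total C D Q) = Inl ` Sorts C \<union> Inr ` Sorts D"
  "Funs (total C D Q) = Inl ` Funs C \<union> (Inr \<circ> Inl) ` UFuns Q \<union> (Inr \<circ> Inr) ` Funs D"
  "csrc (total C D Q) (Inl f) = Inl (csrc C f)"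
  "csrc (total C D Q) (Inr (Inl p)) = Inl (usrc Q p)"
  "csrc (total C D Q) (Inr (Inr g)) = Inr (csrc D g)"
  "ctgt (total C D Q) (Inl f) = Inl (ctgt C f)"
  "ctgt (total C D Q) (Inr (Inl p)) = Inr (utgt Q p)"
  "ctgt (total C D Q) (Inr (Inr g)) = Inr (ctgt D g)"
  by (simp_all add: total_def)

lemma total_mem [simp]:
  "Inl c \<in> Inl ` A \<union> Inr ` B \<longleftrightarrow> c \<in> A"
  "Inr d \<in> Inl ` A \<union> Inr ` B \<longleftrightarrow> d \<in> B"
  "Inl f \<in> Inl ` F \<union> (Inr \<circ> Inl) ` U \<union> (Inr \<circ> Inr) ` G \<longleftrightarrow> f \<in> F"
  "Inr (Inl p) \<in> Inl ` F \<union> (Inr \<circ> Inl) ` U \<union> (Inr \<circ> Inr) ` G \<longleftrightarrow> p \<in> U"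
  "Inr (Inr g) \<in> Inl ` F \<union> (Inr \<circ> Inl) ` U \<union> (Inr \<circ> Inr) ` G \<longleftrightarrow> g \<in> G"
  by auto

lemma Eqs_total_cases [consumes 1, case_names C U D]:
  assumes "(s, t) \<in> Eqs (total C D Q)"
  obtains (C) c fs c' gs where "((c, fs), (c', gs)) \<in> Eqs C" "s = (Inl c, map Inl fs)" "t = (Inl c', map Inl gs)"
  | (U) "(s, t) \<in> UEqs Q"
  | (D) d g d' g' where "((d, g), (d', g')) \<in> Eqs D"
      "s = (Inr d, map (Inr \<circ> Inr) g)" "t = (Inr d', map (Inr \<circ> Inr) g')"
  using assms by (auto simp: total_def)

lemma Eqs_total_C: "((c, fs), (c', gs)) \<in> Eqs C \<Longrightarrow> ((Inl c, map Inl fs), (Inl c', map Inl gs)) \<in> Eqs (total C D Q)"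
  by (force simp: total_def)

lemma Eqs_total_D: "((c, fs), (c', gs)) \<in> Eqs D \<Longrightarrow>
   ((Inr c, map (Inr \<circ> Inr) fs), (Inr c', map (Inr \<circ> Inr) gs)) \<in> Eqs (total C D Q)"
  by (force simp: total_def)

lemma Eqs_total_U: "(s, t) \<in> UEqs Q \<Longrightarrow> (s, t) \<in> Eqs (total C D Q)"
  by (simp add: total_def)

lemma path_ok_total_map_C:
  "path_ok (total C D Q) (Inl c) (map Inl fs) e \<longleftrightarrow> (\<exists>c'. e = Inl c' \<and> path_ok C c fs c')"
  by (induction fs arbitrary: c) auto

lemma path_ok_total_map_D:
  "path_ok (total C D Q) (Inr d) (map (Inr \<circ> Inr) g) e \<longleftrightarrow> (\<exists>d'. e = Inr d' \<and> path_ok D d g d')"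
  by (induction g arbitrary: d) auto

lemma path_ok_total_from_D:
  "path_ok (total C D Q) (Inr d) xs e \<Longrightarrow> \<exists>g d'. xs = map (Inr \<circ> Inr) g \<and> e = Inr d' \<and> path_ok D d g d'"
proof (induction xs arbitrary: d)
  case (Cons x xs)
  then obtain g0 where x: "x = Inr (Inr g0)" "g0 \<in> Funs D" "csrc D g0 = d"
    and xs: "path_ok (total C D Q) (Inr (ctgt D g0)) xs e"
    by (cases x rule: sum.exhaust[case_product sum.exhaust]) auto
  from Cons.IH[OF xs] obtain g d' where "xs = map (Inr \<circ> Inr) g" "e = Inr d'" "path_ok D (ctgt D g0) g d'"
    by blast
  then show ?case using x Cons.prems by (intro exI[of _ "g0 # g"]) (auto dest: path_ok_src)
qed auto

text \<open>Every cross path has this shape (lemma path_ok_total_from_C).\<close>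

definition xp :: "'c \<Rightarrow> 'fc list \<Rightarrow> 'p \<Rightarrow> 'fd list \<Rightarrow> ('c,'d,'fc,'fd,'p) xpath" where
  "xp c fs p g = (Inl c, map Inl fs @ Inr (Inl p) # map (Inr \<circ> Inr) g)"

lemma fst_xp [simp]: "fst (xp c fs p g) = Inl c"
  by (simp add: xp_def)

lemma ov_xp: "ov c t = xp c [] (c, fst t) (snd t)"
  by (simp add: ov_def xp_def)

lemma rcp_xp: "rcp P p g = xp (usrc P p) [] p g"
  by (simp add: rcp_def xp_def)

lemma map_Inl_append_Inr_eq_iff:
  "map Inl fs @ Inr a # xs = map Inl fs' @ Inr a' # xs' \<longleftrightarrow> fs = fs' \<and> a = a' \<and> xs = xs'"
  by (induction fs arbitrary: fs') (auto simp: Cons_eq_append_conv append_eq_Cons_conv)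

lemma map_Inl_neq_append_Inr: "map Inl fs \<noteq> map Inl fs' @ Inr a # xs"
  by (induction fs arbitrary: fs') (auto simp: Cons_eq_append_conv)

lemma map_Inr_Inr_eq_iff [simp]: "map (Inr \<circ> Inr) g = map (Inr \<circ> Inr) h \<longleftrightarrow> g = h"
  by (simp add: inj_map_eq_map inj_def)

lemma xp_eq_iff [simp]: "xp c fs p g = xp c' fs' p' g' \<longleftrightarrow> c = c' \<and> fs = fs' \<and> p = p' \<and> g = g'"
  by (auto simp: xp_def map_Inl_append_Inr_eq_iff)

lemma xp_neq [simp]:
  "xp c fs p g \<noteq> (Inl c', map Inl gs)" "(Inl c', map Inl gs) \<noteq> xp c fs p g"
  "xp c fs p g \<noteq> (Inr d, xs)" "(Inr d, xs) \<noteq> xp c fs p g"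
  by (auto simp: xp_def dest: sym map_Inl_neq_append_Inr[THEN notE])

lemma path_ok_total_xp:
  assumes "wf_catp C"
  shows "path_ok (total C D Q) (Inl c) (snd (xp c fs p g)) e \<longleftrightarrow>
    path_ok C c fs (usrc Q p) \<and> p \<in> UFuns Q \<and> (\<exists>d. e = Inr d \<and> path_ok D (utgt Q p) g d)"
  using path_ok_tgt[OF assms]
  by (auto simp: xp_def path_ok_append path_ok_total_map_C path_ok_total_map_D)

lemma path_ok_total_from_C [consumes 1, case_names C cross]:
  fixes C :: "('c,'fc) catp" and D :: "('d,'fd) catp" and Q :: "('c,'d,'fc,'fd,'p) ucp"
  assumes "path_ok (total C D Q) (Inl c) xs e"
  obtains (C) fs c' where "xs = map Inl fs" "e = Inl c'" "path_ok C c fs c'"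
  | (cross) fs p g d where "(Inl c :: 'c + 'd, xs) = xp c fs p g" "path_ok C c fs (usrc Q p)" "p \<in> UFuns Q"
      "path_ok D (utgt Q p) g d" "e = Inr d"
proof -
  have "(\<exists>fs c'. xs = map Inl fs \<and> e = Inl c' \<and> path_ok C c fs c') \<or>
    (\<exists>fs p g d. (Inl c :: 'c + 'd, xs) = xp c fs p g \<and> path_ok C c fs (usrc Q p) \<and> p \<in> UFuns Q \<and>
       path_ok D (utgt Q p) g d \<and> e = Inr d)"
    using assms
  proof (induction xs arbitrary: c)
    case Nil
    then show ?case by auto
  next
    case (Cons x xs)
    consider (C) f where "x = Inl f" | (U) p where "x = Inr (Inl p)" | (D) g where "x = Inr (Inr g)"
      by (metis sumE)
    then show ?case
    proof cases
      case (C f)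
      with Cons.prems have f: "f \<in> Funs C" "csrc C f = c" "c \<in> Sorts C"
        and xs: "path_ok (total C D Q) (Inl (ctgt C f)) xs e" by auto
      from Cons.IH[OF xs] show ?thesis
      proof (elim disjE exE conjE)
        fix fs c' assume "xs = map Inl fs" "e = Inl c'" "path_ok C (ctgt C f) fs c'"
        then show ?thesis using f C by (intro disjI1 exI[of _ "f # fs"]) auto
      next
        fix fs p g d assume "(Inl (ctgt C f), xs) = xp (ctgt C f) fs p g" "path_ok C (ctgt C f) fs (usrc Q p)"
          "p \<in> UFuns Q" "path_ok D (utgt Q p) g d" "e = Inr d"
        then show ?thesis using f C by (intro disjI2 exI[of _ "f # fs"]) (auto simp: xp_def)
      qed
    next
      case (U p)
      with Cons.prems have p: "p \<in> UFuns Q" "usrc Q p = c" "c \<in> Sorts C"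
        and xs: "path_ok (total C D Q) (Inr (utgt Q p)) xs e" by auto
      from path_ok_total_from_D[OF xs] obtain g d
        where "xs = map (Inr \<circ> Inr) g" "e = Inr d" "path_ok D (utgt Q p) g d"
        by blast
      then show ?thesis using p U by (intro disjI2 exI[of _ "[]"]) (auto simp: xp_def)
    next
      case (D g)
      then show ?thesis using Cons.prems by auto
    qed
  qed
  then show thesis using that by blast
qed

lemma wf_total:
  assumes "wf_catp C" "wf_catp D" "wf_ucp C D Q"
  shows "wf_catp (total C D Q)"
  unfolding wf_catp_def
proof (rule conjI)
  show "\<forall>f\<in>Funs (total C D Q). csrc (total C D Q) f \<in> Sorts (total C D Q) \<and>
      ctgt (total C D Q) f \<in> Sorts (total C D Q)"
    using assms unfolding wf_catp_def wf_ucp_def by auto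
  show "\<forall>((c, fs), (c', gs))\<in>Eqs (total C D Q). c = c' \<and>
      (\<exists>d. path_ok (total C D Q) c fs d \<and> path_ok (total C D Q) c gs d)"
  proof clarify
    fix c fs c' gs assume "((c, fs), (c', gs)) \<in> Eqs (total C D Q)"
    then show "c = c' \<and> (\<exists>d. path_ok (total C D Q) c fs d \<and> path_ok (total C D Q) c gs d)"
    proof (cases rule: Eqs_total_cases)
      case (C c fs c' gs)
      then show ?thesis using wf_catp_eqD[OF assms(1) C(1)] by (auto simp: path_ok_total_map_C)
    next
      case U
      then show ?thesis using assms(3) unfolding wf_ucp_def cross_path_def by fastforce
    next
      case (D d g d' g')
      then show ?thesis using wf_catp_eqD[OF assms(2) D(1)] by (auto simp: path_ok_total_map_D)
    qed
  qed
qed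

lemma uext_map_C [simp]: "uext G (a, map Inl fs) = (a, map Inl fs)"
  by (induction fs) (auto simp: uext_def)

lemma uext_map_D [simp]: "uext G (a, map (Inr \<circ> Inr) g) = (a, map (Inr \<circ> Inr) g)"
  by (induction g) (auto simp: uext_def)

lemma uext_xp: "uext G (xp c fs p g) = (Inl c, map Inl fs @ snd (G p) @ map (Inr \<circ> Inr) g)"
  using uext_map_C[of G "Inl c" fs] uext_map_D[of G "Inl c" g] by (simp add: xp_def uext_def)

lemma uext_ov: "uext (uncurry_mor F) (ov c t) = ov c (iapp (F c) t)"
  unfolding ov_xp uext_xp by (simp add: uncurry_mor_def ov_def iapp_def xp_def)

lemma ucp_morI:
  assumes "\<forall>p\<in>UFuns P. cross_path C D Q (usrc P p) (utgt P p) (F p)"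
    and "\<And>s t. (s, t) \<in> UEqs P \<Longrightarrow> peq (total C D Q) (uext F s) (uext F t)"
  shows "ucp_mor C D P Q F"
  unfolding ucp_mor_def
proof (intro conjI assms(1), clarify)
  fix s t assume "(s, t) \<in> Eqs (total C D P)"
  then show "peq (total C D Q) (uext F s) (uext F t)"
    by (cases rule: Eqs_total_cases) (auto intro: assms(2) peq_eq Eqs_total_C Eqs_total_D)
qed

section \<open>Normal forms of cross paths\<close>

text \<open>Shared by uncurrying (\<phi> c x = (c, x)) and currying (\<phi> c x = x): applying the action
  equations from the innermost symbol of fs outwards normalises fs . \<phi> x . g.\<close>

lemma peq_xp_pact:
  assumes wfC: "wf_catp C" and wfP: "wf_currp_graph C D P"
    and \<phi>: "\<forall>c\<in>Sorts C. \<forall>x\<in>Gens (Inst P c). \<phi> c x \<in> UFuns Q \<and> usrc Q (\<phi> c x) = c \<and>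
                   utgt Q (\<phi> c x) = gsort (Inst P c) x"
    and act: "\<forall>f\<in>Funs C. \<forall>p\<in>Gens (Inst P (ctgt C f)).
       peq (total C D Q) (Inl (csrc C f), [Inl f, Inr (Inl (\<phi> (ctgt C f) p))])
         (xp (csrc C f) [] (\<phi> (csrc C f) (fst (Act P f p))) (snd (Act P f p)))"
    and fs: "path_ok C c fs c1" and x: "x \<in> Gens (Inst P c1)" and g: "path_ok D (gsort (Inst P c1) x) g d"
  shows "peq (total C D Q) (xp c fs (\<phi> c1 x) g)
      (xp c [] (\<phi> c (fst (iapp (pact P fs) (x, g)))) (snd (iapp (pact P fs) (x, g))))"
  using fs
proof (induction fs arbitrary: c)
  case Nil
  then have "path_ok (total C D Q) (Inl c) (snd (xp c [] (\<phi> c1 x) g)) (Inr d)"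
    using x g \<phi> by (intro path_ok_total_xp[OF wfC, THEN iffD2]) auto
  then show ?case using Nil by (auto intro: peq_reflI)
next
  case (Cons f fs)
  let ?T = "total C D Q" and ?c' = "ctgt C f"
  from Cons.prems have f: "f \<in> Funs C" "csrc C f = c" "path_ok C ?c' fs c1" by auto
  have c: "c \<in> Sorts C" "?c' \<in> Sorts C" using wf_catp_fun_sorts[OF wfC f(1)] f(2) by auto
  obtain y k where yk: "iapp (pact P fs) (x, g) = (y, k)" by (cases "iapp (pact P fs) (x, g)")
  have "term_ok D (Inst P ?c') (y, k) d"
    using pact_term_ok[OF wfP wfC f(3) x g] yk by simp
  then have y: "y \<in> Gens (Inst P ?c')" "path_ok D (gsort (Inst P ?c') y) k d"
    by (auto simp: term_ok_def)
  obtain z h where zh: "Act P f y = (z, h)" by (cases "Act P f y")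
  have "peq ?T (xp ?c' fs (\<phi> c1 x) g) (xp ?c' [] (\<phi> ?c' y) k)"
    using Cons.IH[OF f(3)] yk by simp
  from peq_left[OF this[unfolded xp_def], of "Inl f"]
  have 1: "peq ?T (xp c (f # fs) (\<phi> c1 x) g) (Inl c, [Inl f, Inr (Inl (\<phi> ?c' y))] @ map (Inr \<circ> Inr) k)"
    using f by (simp add: xp_def)
  have "peq ?T (Inl c, [Inl f, Inr (Inl (\<phi> ?c' y))]) (Inl c, snd (xp c [] (\<phi> c z) h))"
    using act f y zh by (force simp: xp_def)
  moreover have "path_ok ?T (Inl c) [Inl f, Inr (Inl (\<phi> ?c' y))] (Inr (gsort (Inst P ?c') y))"
    using \<phi> f y c path_ok_src[OF y(2)] by auto
  moreover have "path_ok ?T (Inr (gsort (Inst P ?c') y)) (map (Inr \<circ> Inr) k) (Inr d)"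
    using y by (simp add: path_ok_total_map_D)
  ultimately have "peq ?T (Inl c, [Inl f, Inr (Inl (\<phi> ?c' y))] @ map (Inr \<circ> Inr) k)
      (Inl c, snd (xp c [] (\<phi> c z) h) @ map (Inr \<circ> Inr) k)"
    by (rule peq_append_right)
  then have 2: "peq ?T (Inl c, [Inl f, Inr (Inl (\<phi> ?c' y))] @ map (Inr \<circ> Inr) k) (xp c [] (\<phi> c z) (h @ k))"
    by (simp add: xp_def)
  have e: "iapp (pact P (f # fs)) (x, g) = (z, h @ k)"
    using yk zh by (simp add: iapp_pact_Cons iapp_def)
  show ?case unfolding e using peq_trans[OF 1 2] by simp
qed

section \<open>Uncurrying a curried presentation\<close>

locale curried_presentation =
  fixes C :: "('c,'fc) catp" and D :: "('d,'fd) catp" and P :: "('c,'d,'fc,'fd,'g) currp"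
  assumes wfC: "wf_catp C" and wfD: "wf_catp D" and wfP: "wf_currp C D P"
begin

abbreviation "UP \<equiv> uncurry C P"
abbreviation "TP \<equiv> total C D (uncurry C P)"

lemma uncurry_simps [simp]:
  "UFuns UP = Sigma (Sorts C) (\<lambda>c. Gens (Inst P c))"
  "usrc UP = fst"
  "utgt UP (c, x) = gsort (Inst P c) x"
  by (simp_all add: uncurry_def)

lemma wf_inst: "c \<in> Sorts C \<Longrightarrow> wf_instp D (Inst P c)"
  using wfP by (simp add: wf_currp_def)

lemma gsort_in_Sorts: "c \<in> Sorts C \<Longrightarrow> x \<in> Gens (Inst P c) \<Longrightarrow> gsort (Inst P c) x \<in> Sorts D"
  using wf_inst unfolding wf_instp_def by auto

lemma gen_term_ok: "c \<in> Sorts C \<Longrightarrow> x \<in> Gens (Inst P c) \<Longrightarrow> term_ok D (Inst P c) (x, []) (gsort (Inst P c) x)"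
  using gsort_in_Sorts by (simp add: term_ok_def)

lemma act_inst_mor: "f \<in> Funs C \<Longrightarrow> inst_mor D (Inst P (ctgt C f)) (Inst P (csrc C f)) (Act P f)"
  using wfP by (simp add: wf_currp_def)

lemma act_term_ok: "f \<in> Funs C \<Longrightarrow> p \<in> Gens (Inst P (ctgt C f)) \<Longrightarrow>
    term_ok D (Inst P (csrc C f)) (Act P f p) (gsort (Inst P (ctgt C f)) p)"
  using act_inst_mor unfolding inst_mor_def by auto

lemma ov_in_UEqs: "c \<in> Sorts C \<Longrightarrow> (t, t') \<in> IEqs (Inst P c) \<Longrightarrow> (ov c t, ov c t') \<in> UEqs UP"
  unfolding uncurry_def ucp.simps by blast

lemma act_eq_in_UEqs: "f \<in> Funs C \<Longrightarrow> p \<in> Gens (Inst P (ctgt C f)) \<Longrightarrow>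
  ((Inl (csrc C f), [Inl f, Inr (Inl (ctgt C f, p))]), ov (csrc C f) (Act P f p)) \<in> UEqs UP"
  unfolding uncurry_def by auto

lemma UEqs_uncurry_cases [consumes 1, case_names inst act]:
  assumes "(s, t) \<in> UEqs UP"
  obtains (inst) c u v where "c \<in> Sorts C" "(u, v) \<in> IEqs (Inst P c)" "s = ov c u" "t = ov c v"
  | (act) f p where "f \<in> Funs C" "p \<in> Gens (Inst P (ctgt C f))"
     "s = (Inl (csrc C f), [Inl f, Inr (Inl (ctgt C f, p))])" "t = ov (csrc C f) (Act P f p)"
  using assms by (auto simp: uncurry_def)

lemma ov_path_ok: "c \<in> Sorts C \<Longrightarrow> term_ok D (Inst P c) t d \<Longrightarrow> path_ok TP (Inl c) (snd (ov c t)) (Inr d)"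
  unfolding ov_xp term_ok_def by (intro path_ok_total_xp[OF wfC, THEN iffD2]) auto

lemma peq_ov_refl: "c \<in> Sorts C \<Longrightarrow> term_ok D (Inst P c) t d \<Longrightarrow> peq TP (ov c t) (ov c t)"
  using ov_path_ok by (metis peq_reflI ov_def fst_conv)

lemma wf_uncurry: "wf_ucp C D UP"
  unfolding wf_ucp_def
proof (rule conjI; intro ballI)
  fix p assume "p \<in> UFuns UP"
  then show "usrc UP p \<in> Sorts C \<and> utgt UP p \<in> Sorts D"
    using gsort_in_Sorts by auto
next
  fix st assume "st \<in> UEqs UP"
  moreover obtain s t where st: "st = (s, t)" by (cases st)
  ultimately have "(s, t) \<in> UEqs UP" by simp
  then have "\<exists>c d. cross_path C D UP c d s \<and> cross_path C D UP c d t"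
  proof (cases rule: UEqs_uncurry_cases)
    case (inst c u v)
    then obtain d where d: "term_ok D (Inst P c) u d" "term_ok D (Inst P c) v d"
      using wf_inst[OF inst(1)] unfolding wf_instp_def by blast
    have "cross_path C D UP c d s" "cross_path C D UP c d t"
      using ov_path_ok[OF inst(1) d(1)] ov_path_ok[OF inst(1) d(2)] inst(3,4)
      by (simp_all add: cross_path_def ov_def)
    then show ?thesis by blast
  next
    case (act f p)
    have c: "csrc C f \<in> Sorts C" "ctgt C f \<in> Sorts C" using wf_catp_fun_sorts[OF wfC act(1)] by auto
    have "path_ok TP (Inl (csrc C f)) [Inl f, Inr (Inl (ctgt C f, p))] (Inr (gsort (Inst P (ctgt C f)) p))"
      using act c gsort_in_Sorts by auto
    then have "cross_path C D UP (csrc C f) (gsort (Inst P (ctgt C f)) p) s"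
      "cross_path C D UP (csrc C f) (gsort (Inst P (ctgt C f)) p) t"
      using act ov_path_ok[OF c(1) act_term_ok[OF act(1,2)]] by (simp_all add: cross_path_def ov_def)
    then show ?thesis by blast
  qed
  then show "case st of (s, t) \<Rightarrow> \<exists>c d. cross_path C D UP c d s \<and> cross_path C D UP c d t"
    using st by simp
qed

lemma peq_ov_of_ieq:
  assumes c: "c \<in> Sorts C"
  shows "ieq D (Inst P c) u v \<Longrightarrow> peq TP (ov c u) (ov c v)"
proof (induction rule: ieq.induct)
  case (ieq_refl t d)
  then show ?case using peq_ov_refl[OF c] by blast
next
  case (ieq_eq t t')
  then show ?case using c by (intro peq_eq Eqs_total_U ov_in_UEqs)
next
  case (ieq_sym t t')
  from ieq_sym.IH show ?case by (rule peq_sym)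
next
  case (ieq_trans t t' t'')
  from ieq_trans.IH show ?case by (rule peq_trans)
next
  case (ieq_right x gs y hs f)
  have "path_ok TP (Inl c) (snd (ov c (x, gs))) (Inr (csrc D f))"
    using ieq_right ov_path_ok[OF c] by auto
  with ieq_right peq_right[of TP "Inl c" "snd (ov c (x, gs))" "Inl c" "snd (ov c (y, hs))" "Inr (Inr f)"]
  show ?case by (simp add: ov_def)
next
  case (ieq_Deq x gs c0 g g')
  have "path_ok TP (Inl c) (snd (ov c (x, gs))) (Inr c0)"
    using ieq_Deq ov_path_ok[OF c] by auto
  from peq_append_left[OF peq_eq[OF Eqs_total_D[OF ieq_Deq(2)]] this]
  show ?case by (simp add: ov_def)
qed

lemma peq_xp_ov:
  "path_ok C c fs c1 \<Longrightarrow> x \<in> Gens (Inst P c1) \<Longrightarrow> path_ok D (gsort (Inst P c1) x) g d \<Longrightarrow>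
    peq TP (xp c fs (c1, x) g) (ov c (iapp (pact P fs) (x, g)))"
  using peq_xp_pact[OF wfC wf_currp_graphI[OF wfP], of "\<lambda>c x. (c, x)" "uncurry C P"]
    act_eq_in_UEqs[THEN Eqs_total_U, THEN peq_eq]
  by (auto simp: ov_xp)

lemma peq_act_uext:
  assumes f: "f \<in> Funs C" and u: "term_ok D (Inst P (ctgt C f)) u d" and K: "K (ctgt C f, p) = ov (ctgt C f) u"
  shows "peq TP (uext K (Inl (csrc C f), [Inl f, Inr (Inl (ctgt C f, p))])) (ov (csrc C f) (iapp (Act P f) u))"
proof -
  have "uext K (Inl (csrc C f), [Inl f, Inr (Inl (ctgt C f, p))]) = xp (csrc C f) [f] (ctgt C f, fst u) (snd u)"
    using K by (simp add: uext_def xp_def ov_def)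
  moreover have "peq TP (xp (csrc C f) [f] (ctgt C f, fst u) (snd u))
      (ov (csrc C f) (iapp (pact P [f]) (fst u, snd u)))"
    using u f wf_catp_fun_sorts[OF wfC f] by (intro peq_xp_ov) (auto simp: term_ok_def)
  ultimately show ?thesis by (simp add: iapp_pact_Cons)
qed

text \<open>It is a
  congruence containing the equations, so it contains provable equality; this gives conservativity.\<close>

definition sem_eq :: "('c,'d,'fc,'fd,'c \<times> 'g) xpath \<Rightarrow> ('c,'d,'fc,'fd,'c \<times> 'g) xpath \<Rightarrow> bool" where
  "sem_eq s t \<longleftrightarrow>
   (\<exists>c fs gs c'. s = (Inl c, map Inl fs) \<and> t = (Inl c, map Inl gs) \<and> path_ok C c fs c' \<and> path_ok C c gs c' \<and>
      (\<forall>x\<in>Gens (Inst P c'). ieq D (Inst P c) (pact P fs x) (pact P gs x)))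
 \<or> (\<exists>c fs c1 x g gs c2 y h d. s = xp c fs (c1, x) g \<and> t = xp c gs (c2, y) h \<and>
      path_ok C c fs c1 \<and> x \<in> Gens (Inst P c1) \<and> path_ok D (gsort (Inst P c1) x) g d \<and>
      path_ok C c gs c2 \<and> y \<in> Gens (Inst P c2) \<and> path_ok D (gsort (Inst P c2) y) h d \<and>
      ieq D (Inst P c) (iapp (pact P fs) (x, g)) (iapp (pact P gs) (y, h)))
 \<or> (\<exists>d gs hs d'. s = (Inr d, map (Inr \<circ> Inr) gs) \<and> t = (Inr d, map (Inr \<circ> Inr) hs) \<and>
      path_ok D d gs d' \<and> path_ok D d hs d' \<and>
      (\<forall>c\<in>Sorts C. \<forall>x k. term_ok D (Inst P c) (x, k) d \<longrightarrow> ieq D (Inst P c) (x, k @ gs) (x, k @ hs)))"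

lemma sem_eq_cases [consumes 1, case_names C cross D]:
  assumes "sem_eq s t"
  obtains (C) c fs gs c' where "s = (Inl c, map Inl fs)" "t = (Inl c, map Inl gs)"
      "path_ok C c fs c'" "path_ok C c gs c'"
      "\<forall>x\<in>Gens (Inst P c'). ieq D (Inst P c) (pact P fs x) (pact P gs x)"
  | (cross) c fs c1 x g gs c2 y h d where "s = xp c fs (c1, x) g" "t = xp c gs (c2, y) h"
      "path_ok C c fs c1" "x \<in> Gens (Inst P c1)" "path_ok D (gsort (Inst P c1) x) g d"
      "path_ok C c gs c2" "y \<in> Gens (Inst P c2)" "path_ok D (gsort (Inst P c2) y) h d"
      "ieq D (Inst P c) (iapp (pact P fs) (x, g)) (iapp (pact P gs) (y, h))"
  | (D) d gs hs d' where "s = (Inr d, map (Inr \<circ> Inr) gs)" "t = (Inr d, map (Inr \<circ> Inr) hs)"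
      "path_ok D d gs d'" "path_ok D d hs d'"
      "\<forall>c\<in>Sorts C. \<forall>x k. term_ok D (Inst P c) (x, k) d \<longrightarrow> ieq D (Inst P c) (x, k @ gs) (x, k @ hs)"
  using assms unfolding sem_eq_def by (elim disjE exE conjE) blast+

lemma sem_eq_C: "path_ok C c fs c' \<Longrightarrow> path_ok C c gs c' \<Longrightarrow>
  \<forall>x\<in>Gens (Inst P c'). ieq D (Inst P c) (pact P fs x) (pact P gs x) \<Longrightarrow>
  sem_eq (Inl c, map Inl fs) (Inl c, map Inl gs)"
  unfolding sem_eq_def by blast

lemma sem_eq_cross: "path_ok C c fs c1 \<Longrightarrow> x \<in> Gens (Inst P c1) \<Longrightarrow> path_ok D (gsort (Inst P c1) x) g d \<Longrightarrow>
  path_ok C c gs c2 \<Longrightarrow> y \<in> Gens (Inst P c2) \<Longrightarrow> path_ok D (gsort (Inst P c2) y) h d \<Longrightarrow>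
  ieq D (Inst P c) (iapp (pact P fs) (x, g)) (iapp (pact P gs) (y, h)) \<Longrightarrow>
  sem_eq (xp c fs (c1, x) g) (xp c gs (c2, y) h)"
  unfolding sem_eq_def by blast

lemma sem_eq_D: "path_ok D d gs d' \<Longrightarrow> path_ok D d hs d' \<Longrightarrow>
  \<forall>c\<in>Sorts C. \<forall>x k. term_ok D (Inst P c) (x, k) d \<longrightarrow> ieq D (Inst P c) (x, k @ gs) (x, k @ hs) \<Longrightarrow>
  sem_eq (Inr d, map (Inr \<circ> Inr) gs) (Inr d, map (Inr \<circ> Inr) hs)"
  unfolding sem_eq_def by blast

lemma sem_eq_sym: "sem_eq s t \<Longrightarrow> sem_eq t s"
  by (cases rule: sem_eq_cases) (auto intro!: sem_eq_C sem_eq_cross sem_eq_D intro: ieq_sym)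

lemma sem_eq_trans:
  assumes st: "sem_eq s t" and tu: "sem_eq t u"
  shows "sem_eq s u"
  using st
proof (cases rule: sem_eq_cases)
  case st: (C c fs gs c')
  from tu show ?thesis
  proof (cases rule: sem_eq_cases)
    case (C c0 fs0 gs0 c0')
    then have "c0 = c" "fs0 = gs" "c0' = c'" using st path_ok_tgt_unique by auto
    then show ?thesis using C st by (auto intro!: sem_eq_C intro: ieq_trans)
  qed (use st in auto)
next
  case st: (cross c fs c1 x g gs c2 y h d)
  from tu show ?thesis
  proof (cases rule: sem_eq_cases)
    case (cross c0 fs0 c01 x0 g0 gs0 c02 y0 h0 d0)
    then have "c0 = c" "fs0 = gs" "c01 = c2" "x0 = y" "g0 = h" "d0 = d"
      using st path_ok_tgt_unique by auto
    then show ?thesis using cross st by (auto intro!: sem_eq_cross intro: ieq_trans)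
  qed (use st in auto)
next
  case st: (D d gs hs d')
  from tu show ?thesis
  proof (cases rule: sem_eq_cases)
    case (D d0 gs0 hs0 d0')
    then have "d0 = d" "gs0 = hs" "d0' = d'" using st path_ok_tgt_unique by auto
    then show ?thesis using D st by (auto intro!: sem_eq_D) (meson ieq_trans)
  qed (use st in auto)
qed

lemma sem_eq_refl: "path_ok TP a xs e \<Longrightarrow> sem_eq (a, xs) (a, xs)"
proof (cases a)
  case (Inl c)
  assume "path_ok TP a xs e"
  then have "path_ok TP (Inl c) xs e" using Inl by simp
  then show ?thesis unfolding Inl
  proof (cases rule: path_ok_total_from_C)
    case (C fs c')
    have "term_ok D (Inst P c) (pact P fs x) (gsort (Inst P c') x)" if "x \<in> Gens (Inst P c')" for x
      using pact_term_ok[OF wf_currp_graphI[OF wfP] wfC C(3) that, of "[]"] that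
        path_ok_tgt[OF wfC C(3)] gsort_in_Sorts by simp
    then show "sem_eq (Inl c, xs) (Inl c, xs)"
      unfolding C(1) by (intro sem_eq_C[OF C(3) C(3)]) (auto intro: ieq_refl)
  next
    case (cross fs q g d)
    obtain c1 x where q: "q = (c1, x)" by (cases q)
    have h: "path_ok C c fs c1" "x \<in> Gens (Inst P c1)" "path_ok D (gsort (Inst P c1) x) g d"
      using cross q by auto
    show "sem_eq (Inl c, xs) (Inl c, xs)" unfolding cross(1) q
      by (rule sem_eq_cross[OF h h]) (rule ieq_refl[OF pact_term_ok[OF wf_currp_graphI[OF wfP] wfC h]])
  qed
next
  case (Inr d)
  assume "path_ok TP a xs e"
  from path_ok_total_from_D[OF this[unfolded Inr]]
  obtain g d' where h: "xs = map (Inr \<circ> Inr) g" "path_ok D d g d'" by blast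
  show ?thesis unfolding Inr h(1)
    by (rule sem_eq_D[OF h(2) h(2)]) (auto intro: ieq_refl term_ok_append[OF _ h(2)])
qed

lemma sem_eq_of_Eqs:
  assumes "(s, t) \<in> Eqs TP"
  shows "sem_eq s t"
  using assms
proof (cases rule: Eqs_total_cases)
  case (C c fs c' gs)
  then obtain e where e: "c = c'" "path_ok C c fs e" "path_ok C c gs e"
    using wf_catp_eqD[OF wfC] by blast
  have "inst_meq D (Inst P (ptgt C (c, fs))) (Inst P c) (pact P fs) (pact P gs)"
    using wfP C(1) unfolding wf_currp_def by fastforce
  then show ?thesis
    using C e ptgt_path_ok[OF e(2)] by (auto simp: inst_meq_def intro: sem_eq_C)
next
  case U
  then show ?thesis
  proof (cases rule: UEqs_uncurry_cases)
    case (inst c u v)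
    then obtain d where d: "term_ok D (Inst P c) u d" "term_ok D (Inst P c) v d"
      using wf_inst[OF inst(1)] unfolding wf_instp_def by blast
    show ?thesis unfolding inst ov_xp
      using inst d ieq_eq[OF inst(2)] by (intro sem_eq_cross[where d=d]) (auto simp: term_ok_def)
  next
    case (act f p)
    have c: "csrc C f \<in> Sorts C" "ctgt C f \<in> Sorts C" using wf_catp_fun_sorts[OF wfC act(1)] by auto
    have s: "s = xp (csrc C f) [f] (ctgt C f, p) []" using act by (simp add: xp_def)
    show ?thesis unfolding s act(4) ov_xp
      using act c act_term_ok[OF act(1,2)] gsort_in_Sorts[OF c(2) act(2)]
      by (intro sem_eq_cross[where d="gsort (Inst P (ctgt C f)) p"]) (auto simp: term_ok_def intro: ieq_refl)
  qed
next
  case (D d g d' g')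
  then obtain e where e: "d = d'" "path_ok D d g e" "path_ok D d g' e"
    using wf_catp_eqD[OF wfD] by blast
  show ?thesis unfolding D e(1)
    using D e by (intro sem_eq_D[OF e(2,3)[unfolded e(1)]]) (auto intro: ieq_Deq)
qed

lemma Funs_TP_cases [consumes 1, case_names C gen D]:
  assumes "F \<in> Funs TP"
  obtains (C) f where "F = Inl f" "f \<in> Funs C"
  | (gen) c x where "F = Inr (Inl (c, x))" "c \<in> Sorts C" "x \<in> Gens (Inst P c)"
  | (D) g where "F = Inr (Inr g)" "g \<in> Funs D"
  using assms by auto

lemma sem_eq_Cons_C:
  assumes f: "f \<in> Funs C" and st: "sem_eq (Inl (ctgt C f), xs) (Inl (ctgt C f), ys)"
  shows "sem_eq (Inl (csrc C f), Inl f # xs) (Inl (csrc C f), Inl f # ys)"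
  using st
proof (cases rule: sem_eq_cases)
  case (C c fs gs c')
  have "sem_eq (Inl (csrc C f), map Inl (f # fs)) (Inl (csrc C f), map Inl (f # gs))"
    using C f wf_catp_fun_sorts[OF wfC f]
    by (intro sem_eq_C[where c'=c']) (auto intro!: ieq_iapp[OF act_inst_mor])
  then show ?thesis using C by simp
next
  case (cross c fs c1 x g gs c2 y h d)
  then have c: "c = ctgt C f" by (simp add: xp_def)
  have e: "(Inl (csrc C f), Inl f # xs) = xp (csrc C f) (f # fs) (c1, x) g"
    "(Inl (csrc C f), Inl f # ys) = xp (csrc C f) (f # gs) (c2, y) h"
    using cross by (simp_all add: xp_def)
  show ?thesis unfolding e
    using cross f c wf_catp_fun_sorts[OF wfC f]
    by (intro sem_eq_cross[where d=d])
      (auto simp only: iapp_pact_Cons intro!: ieq_iapp[OF act_inst_mor] path_ok.simps(2)[THEN iffD2])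
qed simp

lemma sem_eq_Cons_gen:
  assumes c: "c \<in> Sorts C" "x \<in> Gens (Inst P c)"
    and st: "sem_eq (Inr (gsort (Inst P c) x), xs) (Inr (gsort (Inst P c) x), ys)"
  shows "sem_eq (Inl c, Inr (Inl (c, x)) # xs) (Inl c, Inr (Inl (c, x)) # ys)"
  using st
proof (cases rule: sem_eq_cases)
  case (D d gs hs d')
  have "ieq D (Inst P c) (x, gs) (x, hs)"
    using D c gen_term_ok by force
  moreover have e: "(Inl c, Inr (Inl (c, x)) # xs) = xp c [] (c, x) gs"
    "(Inl c, Inr (Inl (c, x)) # ys) = xp c [] (c, x) hs"
    using D by (simp_all add: xp_def)
  ultimately show ?thesis unfolding e using D c by (intro sem_eq_cross[where d=d']) auto
qed (auto simp: xp_def)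

lemma sem_eq_Cons_D:
  assumes g0: "g0 \<in> Funs D" and st: "sem_eq (Inr (ctgt D g0), xs) (Inr (ctgt D g0), ys)"
  shows "sem_eq (Inr (csrc D g0), Inr (Inr g0) # xs) (Inr (csrc D g0), Inr (Inr g0) # ys)"
  using st
proof (cases rule: sem_eq_cases)
  case (D d gs hs d')
  have "sem_eq (Inr (csrc D g0), map (Inr \<circ> Inr) (g0 # gs)) (Inr (csrc D g0), map (Inr \<circ> Inr) (g0 # hs))"
  proof (rule sem_eq_D)
    show "path_ok D (csrc D g0) (g0 # gs) d'" "path_ok D (csrc D g0) (g0 # hs) d'"
      using D g0 wf_catp_fun_sorts[OF wfD g0] by auto
    show "\<forall>c\<in>Sorts C. \<forall>x k. term_ok D (Inst P c) (x, k) (csrc D g0) \<longrightarrow>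
          ieq D (Inst P c) (x, k @ g0 # gs) (x, k @ g0 # hs)"
    proof (intro ballI allI impI)
      fix c x k assume "c \<in> Sorts C" "term_ok D (Inst P c) (x, k) (csrc D g0)"
      moreover have "path_ok D (csrc D g0) [g0] (ctgt D g0)"
        using g0 wf_catp_fun_sorts[OF wfD g0] by auto
      ultimately show "ieq D (Inst P c) (x, k @ g0 # gs) (x, k @ g0 # hs)"
        using D term_ok_append[of D "Inst P c" x k "csrc D g0" "[g0]"] by force
    qed
  qed
  then show ?thesis using D by simp
qed (auto simp: xp_def)

lemma sem_eq_Cons:
  assumes "sem_eq (a, xs) (a, ys)" and F: "F \<in> Funs TP" and "ctgt TP F = a"
  shows "sem_eq (csrc TP F, F # xs) (csrc TP F, F # ys)"
  using F assms by (cases rule: Funs_TP_cases) (auto intro: sem_eq_Cons_C sem_eq_Cons_gen sem_eq_Cons_D)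

lemma sem_eq_snoc_C:
  assumes fs: "path_ok C c fs c'" and gs: "path_ok C c gs c'"
    and eq: "\<forall>x\<in>Gens (Inst P c'). ieq D (Inst P c) (pact P fs x) (pact P gs x)"
    and F: "F \<in> Funs TP" "csrc TP F = Inl c'"
  shows "sem_eq (Inl c, map Inl fs @ [F]) (Inl c, map Inl gs @ [F])"
  using F
proof (cases rule: Funs_TP_cases)
  case (C f)
  have "sem_eq (Inl c, map Inl (fs @ [f])) (Inl c, map Inl (gs @ [f]))"
  proof (rule sem_eq_C)
    show "path_ok C c (fs @ [f]) (ctgt C f)" "path_ok C c (gs @ [f]) (ctgt C f)"
      using C F fs gs wf_catp_fun_sorts[OF wfC C(2)] by (auto simp: path_ok_append)
    show "\<forall>x\<in>Gens (Inst P (ctgt C f)). ieq D (Inst P c) (pact P (fs @ [f]) x) (pact P (gs @ [f]) x)"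
    proof
      fix x assume "x \<in> Gens (Inst P (ctgt C f))"
      then have "term_ok D (Inst P c') (Act P f x) (gsort (Inst P (ctgt C f)) x)"
        using act_term_ok[OF C(2)] C F by simp
      from ieq_iapp_meq[OF _ pact_inst_mor[OF wf_currp_graphI[OF wfP] wfC fs] this] eq
      show "ieq D (Inst P c) (pact P (fs @ [f]) x) (pact P (gs @ [f]) x)"
        by (simp add: pact_append inst_meq_def)
    qed
  qed
  then show ?thesis using C by simp
next
  case (gen c1 x)
  then have e: "(Inl c, map Inl fs @ [F]) = xp c fs (c1, x) []" "(Inl c, map Inl gs @ [F]) = xp c gs (c1, x) []"
    by (simp_all add: xp_def)
  show ?thesis unfolding e using gen F fs gs eq gsort_in_Sorts[OF gen(2,3)]
    by (intro sem_eq_cross[where d="gsort (Inst P c1) x"]) auto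
qed (use F in simp)

lemma sem_eq_snoc_cross:
  assumes fs: "path_ok C c fs c1" "x \<in> Gens (Inst P c1)" "path_ok D (gsort (Inst P c1) x) g d"
    and gs: "path_ok C c gs c2" "y \<in> Gens (Inst P c2)" "path_ok D (gsort (Inst P c2) y) h d"
    and eq: "ieq D (Inst P c) (iapp (pact P fs) (x, g)) (iapp (pact P gs) (y, h))"
    and g0: "g0 \<in> Funs D" "csrc D g0 = d"
  shows "sem_eq (xp c fs (c1, x) (g @ [g0])) (xp c gs (c2, y) (h @ [g0]))"
proof (rule sem_eq_cross[where d="ctgt D g0"])
  show "path_ok D (gsort (Inst P c1) x) (g @ [g0]) (ctgt D g0)"
    "path_ok D (gsort (Inst P c2) y) (h @ [g0]) (ctgt D g0)"
    using fs gs g0 wf_catp_fun_sorts[OF wfD g0(1)] by (auto simp: path_ok_append)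
  have "term_ok D (Inst P c) (iapp (pact P fs) (x, g)) d"
    by (rule pact_term_ok[OF wf_currp_graphI[OF wfP] wfC fs])
  then have "ieq D (Inst P c) (fst (iapp (pact P fs) (x, g)), snd (iapp (pact P fs) (x, g)) @ [g0])
      (fst (iapp (pact P gs) (y, h)), snd (iapp (pact P gs) (y, h)) @ [g0])"
    using eq g0 by (intro ieq_right[where x="fst _" and gs="snd _", simplified]) auto
  then show "ieq D (Inst P c) (iapp (pact P fs) (x, g @ [g0])) (iapp (pact P gs) (y, h @ [g0]))"
    by (simp add: iapp_def)
qed (use fs gs in auto)

lemma sem_eq_snoc_D:
  assumes gs: "path_ok D d gs d'" and hs: "path_ok D d hs d'"
    and eq: "\<forall>c\<in>Sorts C. \<forall>x k. term_ok D (Inst P c) (x, k) d \<longrightarrow> ieq D (Inst P c) (x, k @ gs) (x, k @ hs)"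
    and g0: "g0 \<in> Funs D" "csrc D g0 = d'"
  shows "sem_eq (Inr d, map (Inr \<circ> Inr) (gs @ [g0])) (Inr d, map (Inr \<circ> Inr) (hs @ [g0]))"
proof (rule sem_eq_D)
  show "path_ok D d (gs @ [g0]) (ctgt D g0)" "path_ok D d (hs @ [g0]) (ctgt D g0)"
    using gs hs g0 wf_catp_fun_sorts[OF wfD g0(1)] by (auto simp: path_ok_append)
  show "\<forall>c\<in>Sorts C. \<forall>x k. term_ok D (Inst P c) (x, k) d \<longrightarrow>
      ieq D (Inst P c) (x, k @ gs @ [g0]) (x, k @ hs @ [g0])"
  proof (intro ballI allI impI)
    fix c x k assume c: "c \<in> Sorts C" and t: "term_ok D (Inst P c) (x, k) d"
    have "ieq D (Inst P c) (x, k @ gs) (x, k @ hs)" using eq c t by blast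
    moreover have "term_ok D (Inst P c) (x, k @ gs) (csrc D g0)" using t gs g0 by (intro term_ok_append) auto
    ultimately have "ieq D (Inst P c) (x, (k @ gs) @ [g0]) (x, (k @ hs) @ [g0])"
      using g0 by (intro ieq_right) auto
    then show "ieq D (Inst P c) (x, k @ gs @ [g0]) (x, k @ hs @ [g0])" by simp
  qed
qed

lemma sem_eq_snoc:
  assumes st: "sem_eq (a, xs) (b, ys)" and F: "F \<in> Funs TP" and path: "path_ok TP a xs (csrc TP F)"
  shows "sem_eq (a, xs @ [F]) (b, ys @ [F])"
  using st
proof (cases rule: sem_eq_cases)
  case (C c fs gs c')
  then have "path_ok TP a xs (Inl c')" by (simp add: path_ok_total_map_C)
  from path_ok_tgt_unique[OF path this] have "csrc TP F = Inl c'" .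
  from sem_eq_snoc_C[OF C(3-5) F this] show ?thesis using C(1,2) by simp
next
  case (cross c fs c1 x g gs c2 y h d)
  have "path_ok TP (Inl c) (snd (xp c fs (c1, x) g)) (Inr d)"
    using cross path_ok_tgt[OF wfC cross(3)] by (intro path_ok_total_xp[OF wfC, THEN iffD2]) auto
  then have "path_ok TP a xs (Inr d)" using cross(1) by (metis fst_xp fst_conv snd_conv)
  from path_ok_tgt_unique[OF path this] have "csrc TP F = Inr d" .
  with F obtain g0 where g0: "F = Inr (Inr g0)" "g0 \<in> Funs D" "csrc D g0 = d"
    by (cases rule: Funs_TP_cases) auto
  from sem_eq_snoc_cross[OF cross(3-9) g0(2,3)] show ?thesis
    using cross(1,2) g0(1) by (simp add: xp_def)
next
  case (D d gs hs d')
  then have "path_ok TP a xs (Inr d')" by (simp add: path_ok_total_map_D)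
  from path_ok_tgt_unique[OF path this] have "csrc TP F = Inr d'" .
  with F obtain g0 where g0: "F = Inr (Inr g0)" "g0 \<in> Funs D" "csrc D g0 = d'"
    by (cases rule: Funs_TP_cases) auto
  from sem_eq_snoc_D[OF D(3-5) g0(2,3)] show ?thesis using D(1,2) g0(1) by simp
qed

lemma peq_imp_sem_eq: "peq TP s t \<Longrightarrow> sem_eq s t"
proof (induction rule: peq.induct)
  case (peq_refl c fs d)
  then show ?case by (rule sem_eq_refl)
next
  case (peq_eq p q)
  then show ?case by (rule sem_eq_of_Eqs)
next
  case (peq_sym p q)
  from peq_sym.IH show ?case by (rule sem_eq_sym)
next
  case (peq_trans p q r)
  then show ?case by (metis sem_eq_trans)
next
  case (peq_left c fs gs f)
  then show ?case by (intro sem_eq_Cons) auto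
next
  case (peq_right c fs c' gs f)
  then show ?case by (intro sem_eq_snoc) auto
qed

lemma ieq_of_peq_ov: "peq TP (ov c u) (ov c v) \<Longrightarrow> ieq D (Inst P c) u v"
  by (drule peq_imp_sem_eq) (cases rule: sem_eq_cases, auto simp: ov_xp)

lemma peq_ov_iff_ieq: "c \<in> Sorts C \<Longrightarrow> peq TP (ov c u) (ov c v) \<longleftrightarrow> ieq D (Inst P c) u v"
  using ieq_of_peq_ov peq_ov_of_ieq by blast

lemma inst_mor_to_ucp_at: "c \<in> Sorts C \<Longrightarrow> inst_mor D (Inst P c) (ucp_at UP c) (\<lambda>x. ((c, x), []))"
  unfolding inst_mor_def
proof (intro conjI ballI)
  fix x assume "c \<in> Sorts C" "x \<in> Gens (Inst P c)"
  then show "term_ok D (ucp_at UP c) ((c, x), []) (gsort (Inst P c) x)"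
    using gsort_in_Sorts by (simp add: term_ok_def ucp_at_def)
next
  fix tt assume c: "c \<in> Sorts C" and "tt \<in> IEqs (Inst P c)"
  moreover obtain t t' where tt: "tt = (t, t')" by (cases tt)
  ultimately have "(ov c t, ov c t') \<in> UEqs UP" using ov_in_UEqs by simp
  then have "(((c, fst t), snd t), ((c, fst t'), snd t')) \<in> IEqs (ucp_at UP c)"
    by (simp add: ucp_at_def rcp_def ov_def)
  then show "case tt of (t, t') \<Rightarrow> ieq D (ucp_at UP c) (iapp (\<lambda>x. ((c, x), [])) t) (iapp (\<lambda>x. ((c, x), [])) t')"
    using tt by (auto simp: iapp_def intro: ieq_eq)
qed

lemma nongenerative_uncurry: "nongenerative C D UP"
  unfolding nongenerative_def
proof (intro ballI impI)
  fix f p assume f: "f \<in> Funs C" and p: "p \<in> UFuns UP" and tgt: "ctgt C f = usrc UP p"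
  obtain x where x: "p = (ctgt C f, x)" "x \<in> Gens (Inst P (ctgt C f))"
    using p tgt by (cases p) auto
  have "right_cross D UP (ov (csrc C f) (Act P f x))"
    unfolding right_cross_def using act_term_ok[OF f x(2)] wf_catp_fun_sorts[OF wfC f]
    by (intro exI[of _ "(csrc C f, fst (Act P f x))"] exI[of _ "snd (Act P f x)"])
      (auto simp: term_ok_def rcp_def ov_def)
  moreover have "peq TP (Inl (csrc C f), [Inl f, Inr (Inl p)]) (ov (csrc C f) (Act P f x))"
    using x act_eq_in_UEqs[OF f x(2), THEN Eqs_total_U, THEN peq_eq] by simp
  ultimately show "\<exists>y. right_cross D UP y \<and> peq TP (Inl (csrc C f), [Inl f, Inr (Inl p)]) y"
    by blast
qed

lemma conservative_uncurry: "conservative C D UP"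
  unfolding conservative_def
proof (intro allI impI, elim conjE)
  fix c p g d p' g' d'
  assume h: "p \<in> UFuns UP" "p' \<in> UFuns UP" "usrc UP p = c" "usrc UP p' = c"
    "peq TP (rcp UP p g) (rcp UP p' g')"
  obtain x y where xy: "p = (c, x)" "p' = (c, y)" using h by (cases p, cases p') auto
  then have "c \<in> Sorts C" using h by auto
  have "ieq D (Inst P c) (x, g) (y, g')"
    using h(5) xy by (intro ieq_of_peq_ov) (simp add: rcp_def ov_def)
  from ieq_iapp[OF inst_mor_to_ucp_at[OF \<open>c \<in> Sorts C\<close>] this]
  show "ieq D (ucp_at UP c) (p, g) (p', g')" using xy by (simp add: iapp_def)
qed

lemma curryable_uncurry: "curryable C D UP"
  unfolding curryable_def using nongenerative_uncurry conservative_uncurry ..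

lemma uncurry_mor_id: "ucp_meq C D UP UP (uncurry_mor curr_id) (ucp_id UP)"
  unfolding ucp_meq_def
proof
  fix p assume "p \<in> UFuns UP"
  then obtain c x where "p = (c, x)" "c \<in> Sorts C" "x \<in> Gens (Inst P c)" by auto
  then show "peq TP (uncurry_mor curr_id p) (ucp_id UP p)"
    using peq_ov_refl[OF _ gen_term_ok] by (simp add: uncurry_mor_def curr_id_def ucp_id_def ov_def)
qed

lemma uncurry_mor_comp:
  assumes F: "curr_mor C D P' Q' F" and G: "curr_mor C D Q' P G"
  shows "ucp_meq C D (uncurry C P') UP (uncurry_mor (curr_comp G F)) (ucp_comp (uncurry_mor G) (uncurry_mor F))"
  unfolding ucp_meq_def
proof
  fix p assume "p \<in> UFuns (uncurry C P')"
  then obtain c x where p: "p = (c, x)" "c \<in> Sorts C" "x \<in> Gens (Inst P' c)"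
    by (auto simp: uncurry_def)
  have "term_ok D (Inst Q' c) (F c x) (gsort (Inst P' c) x)"
    using F p unfolding curr_mor_def inst_mor_def by auto
  then have "term_ok D (Inst P c) (iapp (G c) (F c x)) (gsort (Inst P' c) x)"
    using G p unfolding curr_mor_def by (intro iapp_term_ok) auto
  moreover have "ucp_comp (uncurry_mor G) (uncurry_mor F) p = (ov c (iapp (G c) (F c x)) :: ('c,'d,'fc,'fd,'c \<times> 'g) xpath)"
    "uncurry_mor (curr_comp G F) p = (ov c (iapp (G c) (F c x)) :: ('c,'d,'fc,'fd,'c \<times> 'g) xpath)"
    using p by (simp_all add: ucp_comp_def uext_ov[symmetric] uncurry_mor_def curr_comp_def icomp_def)
  ultimately show "peq TP (uncurry_mor (curr_comp G F) p) (ucp_comp (uncurry_mor G) (uncurry_mor F) p)"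
    using peq_ov_refl p(2) by simp
qed

end

section \<open>Uncurrying morphisms\<close>

locale curried_pair = source: curried_presentation C D P + target: curried_presentation C D Q
  for C :: "('c,'fc) catp" and D :: "('d,'fd) catp" and P :: "('c,'d,'fc,'fd,'g) currp"
    and Q :: "('c,'d,'fc,'fd,'h) currp"
begin

lemma ucp_mor_uncurry_mor:
  assumes F: "curr_mor C D P Q F"
  shows "ucp_mor C D source.UP target.UP (uncurry_mor F)"
proof (rule ucp_morI)
  have Fc: "inst_mor D (Inst P c) (Inst Q c) (F c)" if "c \<in> Sorts C" for c
    using F that by (simp add: curr_mor_def)
  then have tok: "term_ok D (Inst Q c) (F c x) (gsort (Inst P c) x)"
    if "c \<in> Sorts C" "x \<in> Gens (Inst P c)" for c x
    using that unfolding inst_mor_def by auto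
  show "\<forall>p\<in>UFuns source.UP. cross_path C D target.UP (usrc source.UP p) (utgt source.UP p) (uncurry_mor F p)"
    using target.ov_path_ok[OF _ tok] by (auto simp: cross_path_def uncurry_mor_def ov_def)
  fix s t assume "(s, t) \<in> UEqs source.UP"
  then show "peq target.TP (uext (uncurry_mor F) s) (uext (uncurry_mor F) t)"
  proof (cases rule: source.UEqs_uncurry_cases)
    case (inst c u v)
    then have "ieq D (Inst Q c) (iapp (F c) u) (iapp (F c) v)"
      using Fc[OF inst(1)] unfolding inst_mor_def by auto
    then show ?thesis using inst by (simp add: uext_ov target.peq_ov_of_ieq)
  next
    case (act f p)
    have c: "csrc C f \<in> Sorts C" "ctgt C f \<in> Sorts C" using wf_catp_fun_sorts[OF source.wfC act(1)] by auto
    have "peq target.TP (uext (uncurry_mor F) s) (ov (csrc C f) (iapp (Act Q f) (F (ctgt C f) p)))"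
      unfolding act(3) by (rule target.peq_act_uext[OF act(1) tok[OF c(2) act(2)]]) (simp add: uncurry_mor_def)
    moreover have "ieq D (Inst Q (csrc C f)) (iapp (F (csrc C f)) (Act P f p)) (iapp (Act Q f) (F (ctgt C f) p))"
      using F act unfolding curr_mor_def inst_meq_def icomp_def by auto
    then have "peq target.TP (uext (uncurry_mor F) t) (ov (csrc C f) (iapp (Act Q f) (F (ctgt C f) p)))"
      unfolding act(4) uext_ov using c by (intro target.peq_ov_of_ieq)
    ultimately show ?thesis by (blast intro: peq_trans peq_sym)
  qed
qed

lemma rightward_uncurry_mor:
  assumes F: "curr_mor C D P Q F"
  shows "rightward D source.UP target.UP (uncurry_mor F)"
  unfolding rightward_def
proof
  fix p assume "p \<in> UFuns source.UP"
  then obtain c x where p: "p = (c, x)" "c \<in> Sorts C" "x \<in> Gens (Inst P c)" by auto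
  then have "term_ok D (Inst Q c) (F c x) (gsort (Inst P c) x)"
    using F unfolding curr_mor_def inst_mor_def by auto
  then show "right_cross D target.UP (uncurry_mor F p)"
    unfolding right_cross_def using p
    by (intro exI[of _ "(c, fst (F c x))"] exI[of _ "snd (F c x)"] exI[of _ "gsort (Inst P c) x"])
      (auto simp: term_ok_def uncurry_mor_def ov_def rcp_def)
qed

lemma curr_meq_iff_ucp_meq:
  "curr_meq C D P Q F G \<longleftrightarrow> ucp_meq C D source.UP target.UP (uncurry_mor F) (uncurry_mor G)"
  unfolding curr_meq_def inst_meq_def ucp_meq_def
  by (auto simp: uncurry_mor_def target.peq_ov_iff_ieq)

lemma rightward_mor_ov:
  assumes H: "ucp_mor C D source.UP target.UP H" and R: "rightward D source.UP target.UP H"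
    and c: "c \<in> Sorts C" "x \<in> Gens (Inst P c)"
  shows "\<exists>t. H (c, x) = ov c t \<and> term_ok D (Inst Q c) t (gsort (Inst P c) x)"
proof -
  have cp: "cross_path C D target.UP c (gsort (Inst P c) x) (H (c, x))"
    using H c unfolding ucp_mor_def by auto
  from R c obtain c' y g d where q: "(c', y) \<in> UFuns target.UP" "path_ok D (utgt target.UP (c', y)) g d"
    "H (c, x) = rcp target.UP (c', y) g"
    unfolding rightward_def right_cross_def by force
  then have "c' = c" using cp by (simp add: cross_path_def rcp_def)
  then have e: "H (c, x) = ov c (y, g)" and tok: "term_ok D (Inst Q c) (y, g) d"
    using q by (simp_all add: rcp_def ov_def term_ok_def)
  have "path_ok target.TP (Inl c) (snd (H (c, x))) (Inr d)"
    using target.ov_path_ok[OF c(1) tok] e by simp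
  moreover have "path_ok target.TP (Inl c) (snd (H (c, x))) (Inr (gsort (Inst P c) x))"
    using cp by (simp add: cross_path_def)
  ultimately have "d = gsort (Inst P c) x" using path_ok_tgt_unique by fastforce
  then show ?thesis using e tok by blast
qed

context
  fixes H F
  assumes H: "ucp_mor C D source.UP target.UP H"
    and rep: "\<And>c x. c \<in> Sorts C \<Longrightarrow> x \<in> Gens (Inst P c) \<Longrightarrow>
      H (c, x) = ov c (F c x) \<and> term_ok D (Inst Q c) (F c x) (gsort (Inst P c) x)"
begin

lemma uext_ov_rep: "c \<in> Sorts C \<Longrightarrow> fst t \<in> Gens (Inst P c) \<Longrightarrow> uext H (ov c t) = ov c (iapp (F c) t)"
  using rep by (simp add: ov_xp uext_xp) (simp add: ov_def xp_def iapp_def)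

lemma peq_uext_rep: "(s, t) \<in> UEqs source.UP \<Longrightarrow> peq target.TP (uext H s) (uext H t)"
  using H Eqs_total_U unfolding ucp_mor_def by blast

lemma inst_mor_of_ov_rep:
  assumes c: "c \<in> Sorts C"
  shows "inst_mor D (Inst P c) (Inst Q c) (F c)"
  unfolding inst_mor_def
proof (intro conjI ballI)
  fix x assume "x \<in> Gens (Inst P c)"
  then show "term_ok D (Inst Q c) (F c x) (gsort (Inst P c) x)" using rep c by blast
next
  fix tt assume tt: "tt \<in> IEqs (Inst P c)"
  obtain t t' where tt': "tt = (t, t')" by (cases tt)
  have "fst t \<in> Gens (Inst P c)" "fst t' \<in> Gens (Inst P c)"
    using source.wf_inst[OF c] tt tt' unfolding wf_instp_def term_ok_def by fastforce+
  moreover have "peq target.TP (uext H (ov c t)) (uext H (ov c t'))"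
    using peq_uext_rep[OF source.ov_in_UEqs[OF c]] tt tt' by simp
  ultimately have "peq target.TP (ov c (iapp (F c) t)) (ov c (iapp (F c) t'))"
    using uext_ov_rep[OF c] by simp
  then show "case tt of (t, t') \<Rightarrow> ieq D (Inst Q c) (iapp (F c) t) (iapp (F c) t')"
    using tt' target.ieq_of_peq_ov by simp
qed

lemma natural_of_ov_rep:
  assumes f: "f \<in> Funs C"
  shows "inst_meq D (Inst P (ctgt C f)) (Inst Q (csrc C f))
    (icomp (F (csrc C f)) (Act P f)) (icomp (Act Q f) (F (ctgt C f)))"
  unfolding inst_meq_def icomp_def
proof
  fix p assume p: "p \<in> Gens (Inst P (ctgt C f))"
  have c: "csrc C f \<in> Sorts C" "ctgt C f \<in> Sorts C" using wf_catp_fun_sorts[OF source.wfC f] by auto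
  have "peq target.TP (uext H (Inl (csrc C f), [Inl f, Inr (Inl (ctgt C f, p))]))
      (ov (csrc C f) (iapp (Act Q f) (F (ctgt C f) p)))"
    using rep[OF c(2) p] by (intro target.peq_act_uext[OF f]) auto
  moreover have "peq target.TP (uext H (Inl (csrc C f), [Inl f, Inr (Inl (ctgt C f, p))]))
      (ov (csrc C f) (iapp (F (csrc C f)) (Act P f p)))"
    using peq_uext_rep[OF source.act_eq_in_UEqs[OF f p]] uext_ov_rep[OF c(1)] source.act_term_ok[OF f p]
    by (simp add: term_ok_def)
  ultimately show "ieq D (Inst Q (csrc C f)) (iapp (F (csrc C f)) (Act P f p)) (iapp (Act Q f) (F (ctgt C f) p))"
    by (blast intro: target.ieq_of_peq_ov peq_trans peq_sym)
qed

lemma curr_mor_of_ov_rep: "curr_mor C D P Q F"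
  unfolding curr_mor_def using inst_mor_of_ov_rep natural_of_ov_rep by blast

lemma uncurry_mor_ov_rep: "ucp_meq C D source.UP target.UP (uncurry_mor F) H"
  unfolding ucp_meq_def
proof
  fix p assume "p \<in> UFuns source.UP"
  then obtain c x where p: "p = (c, x)" "c \<in> Sorts C" "x \<in> Gens (Inst P c)" by auto
  have "peq target.TP (ov c (F c x)) (ov c (F c x))"
    using target.peq_ov_refl[OF p(2)] rep[OF p(2,3)] by blast
  then show "peq target.TP (uncurry_mor F p) (H p)"
    using rep[OF p(2,3)] p(1) by (simp add: uncurry_mor_def)
qed

end

lemma uncurry_mor_full:
  assumes H: "ucp_mor C D source.UP target.UP H" and R: "rightward D source.UP target.UP H"
  shows "\<exists>F. curr_mor C D P Q F \<and> ucp_meq C D source.UP target.UP (uncurry_mor F) H"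
proof -
  obtain F where rep: "\<And>c x. c \<in> Sorts C \<Longrightarrow> x \<in> Gens (Inst P c) \<Longrightarrow>
      H (c, x) = ov c (F c x) \<and> term_ok D (Inst Q c) (F c x) (gsort (Inst P c) x)"
    using rightward_mor_ov[OF H R] by metis
  show ?thesis using curr_mor_of_ov_rep[OF H rep] uncurry_mor_ov_rep[OF H rep] by blast
qed

end

section \<open>Currying a curryable presentation\<close>

text \<open>A symbol f acts on a generator p of Q^(ctgt f) by a right cross path provably equal to f.p; one
  exists by nongenerativity, and conservativity makes the choice irrelevant up to instance equality.\<close>

definition curry_ucp :: "('c,'fc) catp \<Rightarrow> ('d,'fd) catp \<Rightarrow> ('c,'d,'fc,'fd,'q) ucp \<Rightarrow> ('c,'d,'fc,'fd,'q) currp" where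
  "curry_ucp C D Q = \<lparr> Inst = ucp_at Q,
     Act = (\<lambda>f p. SOME t. fst t \<in> UFuns Q \<and> usrc Q (fst t) = csrc C f \<and>
        path_ok D (utgt Q (fst t)) (snd t) (utgt Q p) \<and>
        peq (total C D Q) (Inl (csrc C f), [Inl f, Inr (Inl p)]) (rcp Q (fst t) (snd t))) \<rparr>"

locale curryable_presentation =
  fixes C :: "('c,'fc) catp" and D :: "('d,'fd) catp" and Q :: "('c,'d,'fc,'fd,'q) ucp"
  assumes wfC: "wf_catp C" and wfD: "wf_catp D" and wfQ: "wf_ucp C D Q" and cur: "curryable C D Q"
begin

abbreviation "TQ \<equiv> total C D Q"
abbreviation "PQ \<equiv> curry_ucp C D Q"

lemma wf_TQ: "wf_catp TQ"
  by (rule wf_total[OF wfC wfD wfQ])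

lemma ufun_sorts: "p \<in> UFuns Q \<Longrightarrow> usrc Q p \<in> Sorts C \<and> utgt Q p \<in> Sorts D"
  using wfQ unfolding wf_ucp_def by auto

lemma Inst_curry [simp]: "Inst PQ c = ucp_at Q c"
  by (simp add: curry_ucp_def)

lemma ucp_at_simps [simp]: "Gens (ucp_at Q c) = {p \<in> UFuns Q. usrc Q p = c}" "gsort (ucp_at Q c) = utgt Q"
  by (simp_all add: ucp_at_def)

lemma rcp_path_ok: "p \<in> UFuns Q \<Longrightarrow> path_ok D (utgt Q p) g d \<Longrightarrow> path_ok TQ (Inl (usrc Q p)) (snd (rcp Q p g)) (Inr d)"
  unfolding rcp_xp using ufun_sorts by (intro path_ok_total_xp[OF wfC, THEN iffD2]) auto

lemma peq_rcp_of_UEqs: "(rcp Q p g, rcp Q p' g') \<in> UEqs Q \<Longrightarrow> peq TQ (rcp Q p g) (rcp Q p' g')"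
  by (intro peq_eq Eqs_total_U)

lemma ieq_of_peq_rcp:
  assumes "p \<in> UFuns Q" "p' \<in> UFuns Q" "usrc Q p = c" "usrc Q p' = c"
    "path_ok D (utgt Q p) g d" "path_ok D (utgt Q p') g' d'" "peq TQ (rcp Q p g) (rcp Q p' g')"
  shows "ieq D (ucp_at Q c) (p, g) (p', g')"
  using cur assms unfolding curryable_def conservative_def by blast

lemma peq_short_rcp_sorts:
  assumes f: "f \<in> Funs C" and p: "p \<in> UFuns Q" "usrc Q p = ctgt C f"
    and q: "q \<in> UFuns Q" "path_ok D (utgt Q q) g d"
    and eq: "peq TQ (Inl (csrc C f), [Inl f, Inr (Inl p)]) (rcp Q q g)"
  shows "usrc Q q = csrc C f \<and> d = utgt Q p"
proof -
  from peq_path_ok[OF wf_TQ eq] obtain e where src: "Inl (csrc C f) = fst (rcp Q q g)"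
    and e: "path_ok TQ (Inl (csrc C f)) [Inl f, Inr (Inl p)] e" "path_ok TQ (fst (rcp Q q g)) (snd (rcp Q q g)) e"
    unfolding fst_conv snd_conv by blast
  have "e = Inr (utgt Q p)" using e(1) p by auto
  moreover have "path_ok TQ (fst (rcp Q q g)) (snd (rcp Q q g)) (Inr d)"
    using rcp_path_ok[OF q] by (simp add: rcp_def)
  ultimately have "d = utgt Q p" using e(2) path_ok_tgt_unique by fastforce
  with src show ?thesis by (simp add: rcp_def)
qed

lemma curry_act_spec:
  assumes f: "f \<in> Funs C" and p: "p \<in> UFuns Q" "usrc Q p = ctgt C f"
  shows "fst (Act PQ f p) \<in> UFuns Q \<and> usrc Q (fst (Act PQ f p)) = csrc C f \<and>
        path_ok D (utgt Q (fst (Act PQ f p))) (snd (Act PQ f p)) (utgt Q p) \<and>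
        peq TQ (Inl (csrc C f), [Inl f, Inr (Inl p)]) (rcp Q (fst (Act PQ f p)) (snd (Act PQ f p)))"
proof -
  obtain x where x: "right_cross D Q x" "peq TQ (Inl (csrc C f), [Inl f, Inr (Inl p)]) x"
    using cur f p unfolding curryable_def nongenerative_def by metis
  then obtain q g d where q: "q \<in> UFuns Q" "path_ok D (utgt Q q) g d" "x = rcp Q q g"
    unfolding right_cross_def by blast
  have "usrc Q q = csrc C f \<and> d = utgt Q p" using peq_short_rcp_sorts[OF f p q(1,2)] x q by simp
  then have "\<exists>t. fst t \<in> UFuns Q \<and> usrc Q (fst t) = csrc C f \<and>
        path_ok D (utgt Q (fst t)) (snd t) (utgt Q p) \<and>
        peq TQ (Inl (csrc C f), [Inl f, Inr (Inl p)]) (rcp Q (fst t) (snd t))"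
    using q x by (intro exI[of _ "(q, g)"]) auto
  from someI_ex[OF this] show ?thesis by (simp add: curry_ucp_def)
qed

lemma wf_ucp_at: "wf_instp D (ucp_at Q c)"
  unfolding wf_instp_def
proof (intro conjI ballI)
  fix x assume "x \<in> Gens (ucp_at Q c)"
  then show "gsort (ucp_at Q c) x \<in> Sorts D" using ufun_sorts by auto
next
  fix tt assume tt: "tt \<in> IEqs (ucp_at Q c)"
  obtain p g p' g' where e: "tt = ((p, g), (p', g'))" by (cases tt) auto
  have m: "(rcp Q p g, rcp Q p' g') \<in> UEqs Q" "usrc Q p = c" "usrc Q p' = c"
    using tt e by (auto simp: ucp_at_def)
  then obtain c0 d where "cross_path C D Q c0 d (rcp Q p g)" "cross_path C D Q c0 d (rcp Q p' g')"
    using wfQ unfolding wf_ucp_def by blast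
  then have "p \<in> UFuns Q \<and> path_ok D (utgt Q p) g d" "p' \<in> UFuns Q \<and> path_ok D (utgt Q p') g' d"
    unfolding cross_path_def rcp_xp by (auto simp: path_ok_total_xp[OF wfC])
  then show "case tt of (t, t') \<Rightarrow> \<exists>d. term_ok D (ucp_at Q c) t d \<and> term_ok D (ucp_at Q c) t' d"
    using e m by (auto simp: term_ok_def)
qed

text \<open>The action of f respects the equations of Q^(ctgt f): prefix an equation with f, rewrite both
  sides to right cross paths and apply conservativity.\<close>

lemma curry_act_ieq:
  assumes f: "f \<in> Funs C" and eq: "((p, g), (p', g')) \<in> IEqs (ucp_at Q (ctgt C f))"
  shows "ieq D (ucp_at Q (csrc C f)) (iapp (Act PQ f) (p, g)) (iapp (Act PQ f) (p', g'))"
proof -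
  have m: "(rcp Q p g, rcp Q p' g') \<in> UEqs Q" "usrc Q p = ctgt C f" "usrc Q p' = ctgt C f"
    using eq by (auto simp: ucp_at_def)
  have c: "csrc C f \<in> Sorts C" "ctgt C f \<in> Sorts C" using wf_catp_fun_sorts[OF wfC f] by auto
  obtain d where "term_ok D (ucp_at Q (ctgt C f)) (p, g) d" "term_ok D (ucp_at Q (ctgt C f)) (p', g') d"
    using wf_ucp_at eq unfolding wf_instp_def by fastforce
  then have pp: "p \<in> UFuns Q" "p' \<in> UFuns Q" "path_ok D (utgt Q p) g d" "path_ok D (utgt Q p') g' d"
    by (auto simp: term_ok_def)
  obtain q h q' h' where qh: "Act PQ f p = (q, h)" "Act PQ f p' = (q', h')" by (meson prod.exhaust)
  have A1: "q \<in> UFuns Q" "usrc Q q = csrc C f" "path_ok D (utgt Q q) h (utgt Q p)"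
      "peq TQ (Inl (csrc C f), [Inl f, Inr (Inl p)]) (rcp Q q h)"
    using curry_act_spec[OF f pp(1) m(2)] qh by auto
  have A2: "q' \<in> UFuns Q" "usrc Q q' = csrc C f" "path_ok D (utgt Q q') h' (utgt Q p')"
      "peq TQ (Inl (csrc C f), [Inl f, Inr (Inl p')]) (rcp Q q' h')"
    using curry_act_spec[OF f pp(2) m(3)] qh by auto
  have "peq TQ (Inl (ctgt C f), snd (rcp Q p g)) (Inl (ctgt C f), snd (rcp Q p' g'))"
    using peq_rcp_of_UEqs[OF m(1)] m by (simp add: rcp_def)
  from peq_append_left[OF this, of "Inl (csrc C f)" "[Inl f]"]
  have 1: "peq TQ (Inl (csrc C f), [Inl f, Inr (Inl p)] @ map (Inr \<circ> Inr) g)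
                 (Inl (csrc C f), [Inl f, Inr (Inl p')] @ map (Inr \<circ> Inr) g')"
    using f c by (simp add: rcp_def)
  have pa: "path_ok TQ (Inl (csrc C f)) [Inl f, Inr (Inl p)] (Inr (utgt Q p))"
     "path_ok TQ (Inl (csrc C f)) [Inl f, Inr (Inl p')] (Inr (utgt Q p'))"
    using f c pp m ufun_sorts by auto
  have 2: "peq TQ (Inl (csrc C f), [Inl f, Inr (Inl p)] @ map (Inr \<circ> Inr) g) (rcp Q q (h @ g))"
    using peq_append_right[OF A1(4)[unfolded rcp_def] pa(1), of "map (Inr \<circ> Inr) g" "Inr d"] pp A1(2)
    by (simp add: path_ok_total_map_D rcp_def)
  have 3: "peq TQ (Inl (csrc C f), [Inl f, Inr (Inl p')] @ map (Inr \<circ> Inr) g') (rcp Q q' (h' @ g'))"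
    using peq_append_right[OF A2(4)[unfolded rcp_def] pa(2), of "map (Inr \<circ> Inr) g'" "Inr d"] pp A2(2)
    by (simp add: path_ok_total_map_D rcp_def)
  from peq_trans[OF peq_trans[OF peq_sym[OF 2] 1] 3]
  have "peq TQ (rcp Q q (h @ g)) (rcp Q q' (h' @ g'))" .
  then have "ieq D (ucp_at Q (csrc C f)) (q, h @ g) (q', h' @ g')"
    using A1 A2 pp by (intro ieq_of_peq_rcp[where d=d and d'=d]) (auto simp: path_ok_append)
  then show ?thesis using qh by (simp add: iapp_def)
qed

lemma curry_act_inst_mor:
  assumes f: "f \<in> Funs C"
  shows "inst_mor D (ucp_at Q (ctgt C f)) (ucp_at Q (csrc C f)) (Act PQ f)"
  unfolding inst_mor_def
proof (intro conjI ballI)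
  fix p assume "p \<in> Gens (ucp_at Q (ctgt C f))"
  then show "term_ok D (ucp_at Q (csrc C f)) (Act PQ f p) (gsort (ucp_at Q (ctgt C f)) p)"
    using curry_act_spec[OF f] by (simp add: term_ok_def)
next
  fix tt assume "tt \<in> IEqs (ucp_at Q (ctgt C f))"
  then show "case tt of (t, t') \<Rightarrow> ieq D (ucp_at Q (csrc C f)) (iapp (Act PQ f) t) (iapp (Act PQ f) t')"
    using curry_act_ieq[OF f] by (cases tt) auto
qed

lemma wf_currp_graph_curry: "wf_currp_graph C D PQ"
  unfolding wf_currp_graph_def using wf_ucp_at curry_act_inst_mor by (simp only: Inst_curry) blast

lemma peq_xp_curry:
  assumes "path_ok C c fs c1" "p \<in> UFuns Q" "usrc Q p = c1" "path_ok D (utgt Q p) g d"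
  shows "peq TQ (xp c fs p g) (rcp Q (fst (iapp (pact PQ fs) (p, g))) (snd (iapp (pact PQ fs) (p, g))))
     \<and> term_ok D (ucp_at Q c) (iapp (pact PQ fs) (p, g)) d"
proof
  show tok: "term_ok D (ucp_at Q c) (iapp (pact PQ fs) (p, g)) d"
    using pact_term_ok[OF wf_currp_graph_curry wfC assms(1), of p g d] assms by simp
  have "peq TQ (xp c fs p g) (xp c [] (fst (iapp (pact PQ fs) (p, g))) (snd (iapp (pact PQ fs) (p, g))))"
    using peq_xp_pact[OF wfC wf_currp_graph_curry, of "\<lambda>c x. x" Q] curry_act_spec assms
    by (fastforce simp: rcp_xp)
  then show "peq TQ (xp c fs p g) (rcp Q (fst (iapp (pact PQ fs) (p, g))) (snd (iapp (pact PQ fs) (p, g))))"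
    using tok by (simp add: rcp_xp term_ok_def)
qed

lemma ieq_of_peq_xp:
  assumes s: "path_ok C c fs (usrc Q q)" "q \<in> UFuns Q" "path_ok D (utgt Q q) g d"
    and t: "path_ok C c fs' (usrc Q q')" "q' \<in> UFuns Q" "path_ok D (utgt Q q') g' d"
    and eq: "peq TQ (xp c fs q g) (xp c fs' q' g')"
  shows "ieq D (ucp_at Q c) (iapp (pact PQ fs) (q, g)) (iapp (pact PQ fs') (q', g'))"
proof -
  note n1 = peq_xp_curry[OF s(1,2) refl s(3)] and n2 = peq_xp_curry[OF t(1,2) refl t(3)]
  from peq_trans[OF peq_trans[OF peq_sym[OF conjunct1[OF n1]] eq] conjunct1[OF n2]]
  have "peq TQ (rcp Q (fst (iapp (pact PQ fs) (q, g))) (snd (iapp (pact PQ fs) (q, g))))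
      (rcp Q (fst (iapp (pact PQ fs') (q', g'))) (snd (iapp (pact PQ fs') (q', g'))))" .
  then have "ieq D (ucp_at Q c) (fst (iapp (pact PQ fs) (q, g)), snd (iapp (pact PQ fs) (q, g)))
      (fst (iapp (pact PQ fs') (q', g')), snd (iapp (pact PQ fs') (q', g')))"
    using n1 n2 by (intro ieq_of_peq_rcp[where d=d and d'=d]) (auto simp: term_ok_def)
  then show ?thesis by simp
qed

lemma curry_pact_meq:
  assumes "((c, fs), (c', gs)) \<in> Eqs C"
  shows "inst_meq D (Inst PQ (ptgt C (c, fs))) (Inst PQ c) (pact PQ fs) (pact PQ gs)"
proof -
  obtain e where e: "c = c'" "path_ok C c fs e" "path_ok C c gs e"
    using wf_catp_eqD[OF wfC assms] by blast
  have "ieq D (ucp_at Q c) (pact PQ fs x) (pact PQ gs x)" if x: "x \<in> UFuns Q" "usrc Q x = e" for x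
  proof -
    have "utgt Q x \<in> Sorts D" using ufun_sorts[OF x(1)] by simp
    then have "path_ok D (utgt Q x) [] (utgt Q x)" by simp
    moreover have "peq TQ (Inl c, map Inl fs @ [Inr (Inl x)]) (Inl c, map Inl gs @ [Inr (Inl x)])"
      using peq_eq[OF Eqs_total_C[OF assms]] e x ufun_sorts[OF x(1)]
      by (intro peq_append_right[where e="Inl e"]) (auto simp: path_ok_total_map_C)
    then have "peq TQ (xp c fs x []) (xp c gs x [])" by (simp add: xp_def)
    ultimately show ?thesis using ieq_of_peq_xp[of c fs x "[]" _ gs x "[]"] e x by simp
  qed
  then show ?thesis unfolding inst_meq_def ptgt_path_ok[OF e(2)] by simp
qed

lemma wf_curry: "wf_currp C D PQ"
  using wf_currp_graph_curry curry_pact_meq unfolding wf_currp_def wf_currp_graph_def by auto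

sublocale uncurried: curried_presentation C D PQ
  by unfold_locales (rule wfC, rule wfD, rule wf_curry)


lemma cross_path_xp:
  assumes "cross_path C D Q c d s"
  obtains fs q g where "s = xp c fs q g" "path_ok C c fs (usrc Q q)" "q \<in> UFuns Q" "path_ok D (utgt Q q) g d"
proof -
  obtain xs where s: "s = (Inl c, xs)" "path_ok TQ (Inl c) xs (Inr d)"
    using assms unfolding cross_path_def by (cases s) auto
  from s(2) show thesis
    by (cases rule: path_ok_total_from_C) (use s(1) that in auto)
qed

text \<open>The symbols of uncurry (curry Q) are the symbols p of Q tagged with their source.\<close>

definition forget_src :: "'c \<times> 'q \<Rightarrow> ('c,'d,'fc,'fd,'q) xpath" where
  "forget_src x = ucp_id Q (snd x)"

definition tag_src :: "'q \<Rightarrow> ('c,'d,'fc,'fd,'c \<times> 'q) xpath" where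
  "tag_src p = ucp_id uncurried.UP (usrc Q p, p)"

lemma forget_src_ucp_mor: "ucp_mor C D uncurried.UP Q forget_src"
proof (rule ucp_morI)
  show "\<forall>p\<in>UFuns uncurried.UP. cross_path C D Q (usrc uncurried.UP p) (utgt uncurried.UP p) (forget_src p)"
    using rcp_path_ok[of _ "[]"] ufun_sorts by (auto simp: cross_path_def forget_src_def ucp_id_def rcp_def)
  fix s t assume "(s, t) \<in> UEqs uncurried.UP"
  then show "peq TQ (uext forget_src s) (uext forget_src t)"
  proof (cases rule: uncurried.UEqs_uncurry_cases)
    case (inst c u v)
    obtain p g p' g' where uv: "u = (p, g)" "v = (p', g')" by (cases u, cases v)
    have m: "(rcp Q p g, rcp Q p' g') \<in> UEqs Q" "usrc Q p = c" "usrc Q p' = c"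
      using inst(2) uv by (auto simp: ucp_at_def)
    have "uext forget_src s = rcp Q p g" "uext forget_src t = rcp Q p' g'"
      unfolding inst(3,4) uv ov_xp uext_xp using m by (simp_all add: forget_src_def ucp_id_def rcp_def xp_def)
    then show ?thesis using peq_rcp_of_UEqs[OF m(1)] by simp
  next
    case (act f p)
    have p: "p \<in> UFuns Q" "usrc Q p = ctgt C f" using act by auto
    note A = curry_act_spec[OF act(1) p]
    have "uext forget_src s = (Inl (csrc C f), [Inl f, Inr (Inl p)])"
      using act by (simp add: uext_def forget_src_def ucp_id_def)
    moreover have "uext forget_src t = rcp Q (fst (Act PQ f p)) (snd (Act PQ f p))"
      unfolding act(4) ov_xp uext_xp using A by (simp add: forget_src_def ucp_id_def rcp_def xp_def)
    ultimately show ?thesis using A by simp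
  qed
qed

lemma forget_src_rightward: "rightward D uncurried.UP Q forget_src"
  unfolding rightward_def right_cross_def
proof
  fix x assume "x \<in> UFuns uncurried.UP"
  then obtain p where x: "x = (usrc Q p, p)" "p \<in> UFuns Q" by auto
  then show "\<exists>p g d. p \<in> UFuns Q \<and> path_ok D (utgt Q p) g d \<and> forget_src x = rcp Q p g"
    using ufun_sorts[OF x(2)]
    by (intro exI[of _ p] exI[of _ "[]"] exI[of _ "utgt Q p"]) (auto simp: forget_src_def ucp_id_def rcp_def)
qed

text \<open>Every equation of Q is between cross paths; both sides normalise to right cross paths that are
  equal in Q^c by conservativity, and hence equal in the uncurried presentation.\<close>

lemma tag_src_ucp_mor: "ucp_mor C D Q uncurried.UP tag_src"
proof (rule ucp_morI)
  show "\<forall>p\<in>UFuns Q. cross_path C D uncurried.UP (usrc Q p) (utgt Q p) (tag_src p)"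
  proof
    fix p assume p: "p \<in> UFuns Q"
    then have "term_ok D (ucp_at Q (usrc Q p)) (p, []) (utgt Q p)"
      using ufun_sorts by (simp add: term_ok_def)
    from uncurried.ov_path_ok[OF _ this[folded Inst_curry]] ufun_sorts[OF p]
    show "cross_path C D uncurried.UP (usrc Q p) (utgt Q p) (tag_src p)"
      by (simp add: cross_path_def tag_src_def ucp_id_def ov_def)
  qed
  fix s t assume st: "(s, t) \<in> UEqs Q"
  then obtain c d where "cross_path C D Q c d s" "cross_path C D Q c d t"
    using wfQ unfolding wf_ucp_def by blast
  then obtain fs q g fs' q' g' where
    s: "s = xp c fs q g" "path_ok C c fs (usrc Q q)" "q \<in> UFuns Q" "path_ok D (utgt Q q) g d" and
    t: "t = xp c fs' q' g'" "path_ok C c fs' (usrc Q q')" "q' \<in> UFuns Q" "path_ok D (utgt Q q') g' d"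
    by (elim cross_path_xp)
  have "c \<in> Sorts C" using s(2) path_ok_src by metis
  have "ieq D (ucp_at Q c) (iapp (pact PQ fs) (q, g)) (iapp (pact PQ fs') (q', g'))"
    using ieq_of_peq_xp[OF s(2-4) t(2-4)] peq_eq[OF Eqs_total_U[OF st]] s(1) t(1) by simp
  then have mid: "peq uncurried.TP (ov c (iapp (pact PQ fs) (q, g))) (ov c (iapp (pact PQ fs') (q', g')))"
    using uncurried.peq_ov_of_ieq[OF \<open>c \<in> Sorts C\<close>] by simp
  have ns: "peq uncurried.TP (xp c fs (usrc Q q, q) g) (ov c (iapp (pact PQ fs) (q, g)))"
    using s by (intro uncurried.peq_xp_ov) auto
  have nt: "peq uncurried.TP (xp c fs' (usrc Q q', q') g') (ov c (iapp (pact PQ fs') (q', g')))"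
    using t by (intro uncurried.peq_xp_ov) auto
  have "uext tag_src s = xp c fs (usrc Q q, q) g" "uext tag_src t = xp c fs' (usrc Q q', q') g'"
    unfolding s(1) t(1) uext_xp by (simp_all add: tag_src_def ucp_id_def xp_def)
  then show "peq uncurried.TP (uext tag_src s) (uext tag_src t)"
    using peq_trans[OF peq_trans[OF ns mid] peq_sym[OF nt]] by simp
qed

lemma tag_src_rightward: "rightward D Q uncurried.UP tag_src"
  unfolding rightward_def right_cross_def
proof
  fix p assume p: "p \<in> UFuns Q"
  then show "\<exists>x g d. x \<in> UFuns uncurried.UP \<and> path_ok D (utgt uncurried.UP x) g d \<and> tag_src p = rcp uncurried.UP x g"
    using p ufun_sorts[OF p]
    by (intro exI[of _ "(usrc Q p, p)"] exI[of _ "[]"] exI[of _ "utgt Q p"]) (simp add: tag_src_def ucp_id_def rcp_def)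
qed

lemma tag_forget_src: "ucp_meq C D uncurried.UP uncurried.UP (ucp_comp tag_src forget_src) (ucp_id uncurried.UP)"
  unfolding ucp_meq_def
proof
  fix x assume "x \<in> UFuns uncurried.UP"
  then obtain p where x: "x = (usrc Q p, p)" "p \<in> UFuns Q" by auto
  then have "ucp_comp tag_src forget_src x = ov (usrc Q p) (p, [])" "ucp_id uncurried.UP x = ov (usrc Q p) (p, [])"
    by (simp_all add: ucp_comp_def uext_def tag_src_def forget_src_def ucp_id_def ov_def)
  then show "peq uncurried.TP (ucp_comp tag_src forget_src x) (ucp_id uncurried.UP x)"
    using uncurried.peq_ov_refl[OF _ uncurried.gen_term_ok] ufun_sorts[OF x(2)] x(2) by simp
qed

lemma forget_tag_src: "ucp_meq C D Q Q (ucp_comp forget_src tag_src) (ucp_id Q)"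
  unfolding ucp_meq_def
proof
  fix p assume p: "p \<in> UFuns Q"
  have "ucp_comp forget_src tag_src p = rcp Q p []" "ucp_id Q p = rcp Q p []"
    by (simp_all add: ucp_comp_def uext_def tag_src_def forget_src_def ucp_id_def rcp_def)
  moreover have "path_ok TQ (fst (rcp Q p [])) (snd (rcp Q p [])) (Inr (utgt Q p))"
    using rcp_path_ok[OF p, of "[]"] ufun_sorts[OF p] by (simp add: rcp_def)
  ultimately show "peq TQ (ucp_comp forget_src tag_src p) (ucp_id Q p)"
    using peq_reflI by metis
qed

lemma uncurry_curry_iso:
  "\<exists>A B. ucp_mor C D uncurried.UP Q A \<and> rightward D uncurried.UP Q A \<and>
     ucp_mor C D Q uncurried.UP B \<and> rightward D Q uncurried.UP B \<and>
     ucp_meq C D uncurried.UP uncurried.UP (ucp_comp B A) (ucp_id uncurried.UP) \<and>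
     ucp_meq C D Q Q (ucp_comp A B) (ucp_id Q)"
  using forget_src_ucp_mor forget_src_rightward tag_src_ucp_mor tag_src_rightward tag_forget_src forget_tag_src
  by blast

end

section \<open>Finiteness\<close>

lemma fin_uncurry:
  assumes "wf_catp C" "fin_catp C" "fin_currp C P"
  shows "fin_ucp (uncurry C P)"
proof -
  have fs: "finite (Sorts C)" "finite (Funs C)" using assms(2) by (auto simp: fin_catp_def)
  have fi: "finite (Gens (Inst P c))" "finite (IEqs (Inst P c))" if "c \<in> Sorts C" for c
    using assms(3) that by (auto simp: fin_currp_def fin_instp_def)
  have "finite (Sigma (Funs C) (\<lambda>f. Gens (Inst P (ctgt C f))))"
    using fs fi wf_catp_fun_sorts[OF assms(1)] by auto
  moreover have "finite (Sigma (Sorts C) (\<lambda>c. IEqs (Inst P c)))" using fs fi by auto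
  moreover have "UEqs (uncurry C P) \<subseteq> (\<lambda>(c, tt). (ov c (fst tt), ov c (snd tt))) ` Sigma (Sorts C) (\<lambda>c. IEqs (Inst P c))
      \<union> (\<lambda>(f, p). ((Inl (csrc C f), [Inl f, Inr (Inl (ctgt C f, p))]), ov (csrc C f) (Act P f p))) `
         Sigma (Funs C) (\<lambda>f. Gens (Inst P (ctgt C f)))"
    by (auto simp: uncurry_def image_iff) force+
  ultimately have "finite (UEqs (uncurry C P))"
    by (meson finite_Un finite_imageI finite_subset)
  then show ?thesis using fs fi by (simp add: fin_ucp_def uncurry_def)
qed

lemma fin_curry:
  assumes "fin_ucp Q"
  shows "fin_currp C (curry_ucp C D Q)"
  unfolding fin_currp_def fin_instp_def
proof (intro ballI conjI)
  fix c
  show "finite (Gens (Inst (curry_ucp C D Q) c))"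
    using assms by (auto simp: fin_ucp_def curry_ucp_def ucp_at_def)
  have "inj (\<lambda>((p, g), (p', g')). (rcp Q p g, rcp Q p' g'))"
    by (auto simp: inj_def rcp_def)
  then have "finite ((\<lambda>((p, g), (p', g')). (rcp Q p g, rcp Q p' g')) -` UEqs Q)"
    using assms by (intro finite_vimageI) (auto simp: fin_ucp_def)
  moreover have "IEqs (Inst (curry_ucp C D Q) c) \<subseteq> (\<lambda>((p, g), (p', g')). (rcp Q p g, rcp Q p' g')) -` UEqs Q"
    by (auto simp: curry_ucp_def ucp_at_def)
  ultimately show "finite (IEqs (Inst (curry_ucp C D Q) c))" by (rule finite_subset[rotated])
qed

theorem mainTheorem15:
  fixes C :: "('c,'fc) catp" and D :: "('d,'fd) catp"
  assumes "wf_catp C" and "wf_catp D"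
  shows
    \<comment> \<open>values in curryable presentations\<close>
    "(\<forall>P :: ('c,'d,'fc,'fd,'g) currp. wf_currp C D P \<longrightarrow>
        wf_ucp C D (uncurry C P) \<and> curryable C D (uncurry C P))
   \<comment> \<open>functor on morphisms, values in rightward morphisms\<close>
   \<and> (\<forall>(P :: ('c,'d,'fc,'fd,'g) currp) (Q :: ('c,'d,'fc,'fd,'h) currp) F.
        wf_currp C D P \<and> wf_currp C D Q \<and> curr_mor C D P Q F \<longrightarrow>
        ucp_mor C D (uncurry C P) (uncurry C Q) (uncurry_mor F) \<and>
        rightward D (uncurry C P) (uncurry C Q) (uncurry_mor F))
   \<comment> \<open>functoriality (up to provable equality)\<close>
   \<and> (\<forall>P :: ('c,'d,'fc,'fd,'g) currp. wf_currp C D P \<longrightarrow>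
        ucp_meq C D (uncurry C P) (uncurry C P) (uncurry_mor curr_id) (ucp_id (uncurry C P)))
   \<and> (\<forall>(P :: ('c,'d,'fc,'fd,'g) currp) (Q :: ('c,'d,'fc,'fd,'h) currp)
        (R :: ('c,'d,'fc,'fd,'k) currp) F G.
        wf_currp C D P \<and> wf_currp C D Q \<and> wf_currp C D R \<and>
        curr_mor C D P Q F \<and> curr_mor C D Q R G \<longrightarrow>
        ucp_meq C D (uncurry C P) (uncurry C R) (uncurry_mor (curr_comp G F))
          (ucp_comp (uncurry_mor G) (uncurry_mor F)))
   \<comment> \<open>preserves and reflects provable equality of morphisms (in particular faithful)\<close>
   \<and> (\<forall>(P :: ('c,'d,'fc,'fd,'g) currp) (Q :: ('c,'d,'fc,'fd,'h) currp) F G.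
        wf_currp C D P \<and> wf_currp C D Q \<and> curr_mor C D P Q F \<and> curr_mor C D P Q G \<longrightarrow>
        (curr_meq C D P Q F G \<longleftrightarrow>
         ucp_meq C D (uncurry C P) (uncurry C Q) (uncurry_mor F) (uncurry_mor G)))
   \<comment> \<open>full onto rightward morphisms\<close>
   \<and> (\<forall>(P :: ('c,'d,'fc,'fd,'g) currp) (Q :: ('c,'d,'fc,'fd,'h) currp) H.
        wf_currp C D P \<and> wf_currp C D Q \<and>
        ucp_mor C D (uncurry C P) (uncurry C Q) H \<and> rightward D (uncurry C P) (uncurry C Q) H \<longrightarrow>
        (\<exists>F. curr_mor C D P Q F \<and> ucp_meq C D (uncurry C P) (uncurry C Q) (uncurry_mor F) H))
   \<comment> \<open>essentially surjective onto Crble (isomorphism in Crble)\<close>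
   \<and> (\<forall>Q :: ('c,'d,'fc,'fd,'q) ucp. wf_ucp C D Q \<and> curryable C D Q \<longrightarrow>
        (\<exists>(P :: ('c,'d,'fc,'fd,'q) currp) A B. wf_currp C D P \<and>
           ucp_mor C D (uncurry C P) Q A \<and> rightward D (uncurry C P) Q A \<and>
           ucp_mor C D Q (uncurry C P) B \<and> rightward D Q (uncurry C P) B \<and>
           ucp_meq C D (uncurry C P) (uncurry C P) (ucp_comp B A) (ucp_id (uncurry C P)) \<and>
           ucp_meq C D Q Q (ucp_comp A B) (ucp_id Q)))
   \<comment> \<open>finite case: restriction FinCurr -> FinCrble is well-defined and essentially surjective\<close>
   \<and> (fin_catp C \<and> fin_catp D \<longrightarrow>
        (\<forall>P :: ('c,'d,'fc,'fd,'g) currp. wf_currp C D P \<and> fin_currp C P \<longrightarrow>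
            fin_ucp (uncurry C P))
      \<and> (\<forall>Q :: ('c,'d,'fc,'fd,'q) ucp. wf_ucp C D Q \<and> curryable C D Q \<and> fin_ucp Q \<longrightarrow>
        (\<exists>(P :: ('c,'d,'fc,'fd,'q) currp) A B. wf_currp C D P \<and> fin_currp C P \<and>
           ucp_mor C D (uncurry C P) Q A \<and> rightward D (uncurry C P) Q A \<and>
           ucp_mor C D Q (uncurry C P) B \<and> rightward D Q (uncurry C P) B \<and>
           ucp_meq C D (uncurry C P) (uncurry C P) (ucp_comp B A) (ucp_id (uncurry C P)) \<and>
           ucp_meq C D Q Q (ucp_comp A B) (ucp_id Q))))"
proof -
  note pres = curried_presentation.intro[OF assms]
  note pair = curried_pair.intro[OF pres pres]
  note crble = curryable_presentation.intro[OF assms]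
  show ?thesis
    apply (intro conjI allI impI; (elim conjE)?)
    subgoal by (rule curried_presentation.wf_uncurry[OF pres])
    subgoal by (rule curried_presentation.curryable_uncurry[OF pres])
    subgoal by (rule curried_pair.ucp_mor_uncurry_mor[OF pair])
    subgoal by (rule curried_pair.rightward_uncurry_mor[OF pair])
    subgoal by (rule curried_presentation.uncurry_mor_id[OF pres])
    subgoal by (rule curried_presentation.uncurry_mor_comp[OF pres])
    subgoal by (rule curried_pair.curr_meq_iff_ucp_meq[OF pair])
    subgoal by (rule curried_pair.uncurry_mor_full[OF pair])
    subgoal using curryable_presentation.wf_curry[OF crble] curryable_presentation.uncurry_curry_iso[OF crble]
      by blast
    subgoal by (rule fin_uncurry[OF assms(1)])
    subgoal using curryable_presentation.wf_curry[OF crble] curryable_presentation.uncurry_curry_iso[OF crble]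
        fin_curry by blast
    done
qed

end
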